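(* Let $n\geq 4$ and let $Z\in\mathbb{R}^{n\times 4}$ be totally positive with rows $Z_1,\dots,Z_n$. The algebraic boundary $\partial_a\mathcal{A}_n$ of the amplituhedron $\mathcal{A}_n=\mathcal{A}_n(Z)$ is the union of the following hyperplane sections of $\mathrm{Gr}_{\mathbb{C}}(2,4)$: $\langle AB\,i(i+1)\rangle=0$ for $i=1,\dots,n-1$, and $\langle AB\,1n\rangle=0$.
   Context: A real matrix of rank $k$ with $k$ rows is totally nonnegative (resp. totally positive) if all its maximal minors are $\geq0$ (resp. $>0$) up to a common sign. $\mathrm{Gr}(2,n)_{\geq0}$ is the set of row spans of totally nonnegative $2\times n$ matrices. The amplituhedron $\mathcal{A}_n(Z)\subset\mathrm{Gr}_{\mathbb{R}}(2,4)$ is the image of $\mathrm{Gr}(2,n)_{\geq 0}$ under $\mathrm{rowspan}(X)\mapsto\mathrm{rowspan}(X\cdot Z)$. Lines in $\mathbb{P}^3$ are identified with points of $\mathrm{Gr}(2,4)\subset\mathbb{P}^5$ via Plücker coordinates. For a line $AB$ spanned by vectors $A,B\in\mathbb{C}^4$, $\langle AB\,ij\rangle$ denotes the determinant of the $4\times4$ matrix with rows $A,B,Z_i,Z_j$; it is a linear form in the Plücker coordinates of $AB$, vanishing exactly when the line $AB$ meets the line $Z_iZ_j$. The algebraic boundary $\partial_a\mathcal{A}_n$ is the Zariski closure in $\mathrm{Gr}_{\mathbb{C}}(2,4)$ of the boundary $\mathcal{A}_n\setminus\mathrm{int}(\mathcal{A}_n)$, the interior taken in the Euclidean topology of $\mathrm{Gr}_{\mathbb{R}}(2,4)$.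 *)

theory Defs
  imports "HOL-Analysis.Analysis"
begin

text \<open>2x2 minor (columns i<j) of the 2 x n matrix with rows x1, x2 (columns indexed 1..n).\<close>
definition minor2 :: "(nat \<Rightarrow> real) \<Rightarrow> (nat \<Rightarrow> real) \<Rightarrow> nat \<Rightarrow> nat \<Rightarrow> real" where
  "minor2 x1 x2 i j = x1 i * x2 j - x1 j * x2 i"

text \<open>Totally nonnegative 2 x n matrix: rank 2, all maximal minors >= 0 up to a common sign.\<close>
definition TNN2 :: "nat \<Rightarrow> (nat \<Rightarrow> real) \<Rightarrow> (nat \<Rightarrow> real) \<Rightarrow> bool" where
  "TNN2 n x1 x2 \<longleftrightarrow>
     (\<exists>i j. 1 \<le> i \<and> i < j \<and> j \<le> n \<and> minor2 x1 x2 i j \<noteq> 0) \<and>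
     ((\<forall>i j. 1 \<le> i \<and> i < j \<and> j \<le> n \<longrightarrow> minor2 x1 x2 i j \<ge> 0) \<or>
      (\<forall>i j. 1 \<le> i \<and> i < j \<and> j \<le> n \<longrightarrow> minor2 x1 x2 i j \<le> 0))"

definition det4 :: "'a::comm_ring_1^4 \<Rightarrow> 'a^4 \<Rightarrow> 'a^4 \<Rightarrow> 'a^4 \<Rightarrow> 'a" where
  "det4 a b c d = det (vector [a, b, c, d] :: 'a^4^4)"

text \<open>The n x 4 matrix Z with rows Z 1, ..., Z n is totally positive: all maximal
  (4x4) minors are > 0 up to a common sign (for n >= 4 this forces rank 4).\<close>
definition totally_positive_Z :: "nat \<Rightarrow> (nat \<Rightarrow> real^4) \<Rightarrow> bool" where
  "totally_positive_Z n Z \<longleftrightarrow>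
     (\<forall>a b c d. 1 \<le> a \<and> a < b \<and> b < c \<and> c < d \<and> d \<le> n \<longrightarrow> det4 (Z a) (Z b) (Z c) (Z d) > 0) \<or>
     (\<forall>a b c d. 1 \<le> a \<and> a < b \<and> b < c \<and> c < d \<and> d \<le> n \<longrightarrow> det4 (Z a) (Z b) (Z c) (Z d) < 0)"

definition pl :: "'a::comm_ring_1^4 \<Rightarrow> 'a^4 \<Rightarrow> 'a^6" where
  "pl A B = (let m = (\<lambda>i j. A$i * B$j - A$j * B$i) in
     vector [m 1 2, m 1 3, m 1 4, m 2 3, m 2 4, m 3 4])"

text \<open>Subsets of Grassmannians are represented by their affine cones in Pluecker space
  (with the origin removed).\<close>

definition GrR :: "(real^6) set" where
  "GrR = {pl A B | A B. pl A B \<noteq> 0}"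

definition GrC :: "(complex^6) set" where
  "GrC = {pl A B | A B. pl A B \<noteq> 0}"

definition cvec :: "real^'n \<Rightarrow> complex^'n" where
  "cvec v = (\<chi> i. complex_of_real (v $ i))"

definition amplituhedron :: "nat \<Rightarrow> (nat \<Rightarrow> real^4) \<Rightarrow> (real^6) set" where
  "amplituhedron n Z =
     {pl (\<Sum>i=1..n. x1 i *\<^sub>R Z i) (\<Sum>i=1..n. x2 i *\<^sub>R Z i) | x1 x2.
        TNN2 n x1 x2 \<and> pl (\<Sum>i=1..n. x1 i *\<^sub>R Z i) (\<Sum>i=1..n. x2 i *\<^sub>R Z i) \<noteq> 0}"

definition euclid_boundary :: "(real^6) set \<Rightarrow> (real^6) set" where
  "euclid_boundary S = S - ((top_of_set GrR) interior_of S)"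

inductive_set poly_fun :: "(complex^6 \<Rightarrow> complex) set" where
  pf_const: "(\<lambda>p. c) \<in> poly_fun"
| pf_coord: "(\<lambda>p. p $ i) \<in> poly_fun"
| pf_add: "f \<in> poly_fun \<Longrightarrow> g \<in> poly_fun \<Longrightarrow> (\<lambda>p. f p + g p) \<in> poly_fun"
| pf_mult: "f \<in> poly_fun \<Longrightarrow> g \<in> poly_fun \<Longrightarrow> (\<lambda>p. f p * g p) \<in> poly_fun"

definition homog_poly :: "(complex^6 \<Rightarrow> complex) \<Rightarrow> bool" where
  "homog_poly f \<longleftrightarrow> f \<in> poly_fun \<and> (\<exists>d::nat. \<forall>c p. f (c *s p) = c ^ d * f p)"

definition zariski_closed_Gr :: "(complex^6) set \<Rightarrow> bool" where
  "zariski_closed_Gr T \<longleftrightarrow> (\<exists>F. (\<forall>f\<in>F. homog_poly f) \<and> T = {p \<in> GrC. \<forall>f\<in>F. f p = 0})"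

definition zariski_closure_Gr :: "(complex^6) set \<Rightarrow> (complex^6) set" where
  "zariski_closure_Gr S = \<Inter>{T. zariski_closed_Gr T \<and> S \<subseteq> T}"

definition algebraic_boundary :: "nat \<Rightarrow> (nat \<Rightarrow> real^4) \<Rightarrow> (complex^6) set" where
  "algebraic_boundary n Z = zariski_closure_Gr (cvec ` euclid_boundary (amplituhedron n Z))"

definition bracket_section :: "(nat \<Rightarrow> real^4) \<Rightarrow> nat \<Rightarrow> nat \<Rightarrow> (complex^6) set" where
  "bracket_section Z i j =
     {pl A B | A B. pl A B \<noteq> 0 \<and> det4 A B (cvec (Z i)) (cvec (Z j)) = 0}"

end

theory Submission
  imports Defs "HOL-Computational_Algebra.Polynomial"
begin

(* Write <AB rs> for det4 A B (Z r) (Z s); the pairs (i, i+1) and (1, n) are adjacent.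

   Boundary points lie on the adjacent sections. By Cauchy-Binet, each adjacent bracket of a
   line AB in A_n is a sum of 2 x 2 minors of a totally nonnegative matrix times 4 x 4 minors of
   Z of one sign, so the adjacent brackets share a sign; if none of them vanishes, the
   variation-diminishing property forces j -> <AB 1j> to change sign. Conversely, every line
   satisfying these open sign conditions lies in A_n: it is spanned by its intersections with the
   planes (1, i, i+1) and (1, j, j+1) at the first two sign changes, which are the rows of X Z for
   a totally nonnegative X with three nonzero columns. So a line of A_n with all adjacent brackets
   nonzero is interior, and the product of the adjacent brackets is a homogeneous polynomial
   cutting out the union of the sections.

   Each section lies in the Zariski closure of the boundary. It is parametrized polynomially by
   the lines through a point of the line Z_i Z_(i+1); on an open orthant of parameters the line
   is X Z for an explicit totally nonnegative X, and it is a boundary point because moving it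
   slightly gives two adjacent brackets of opposite signs. A polynomial vanishing on that orthant
   vanishes identically. *)

section \<open>Determinants and Pluecker coordinates\<close>

lemma vector_4 [simp]:
  "(vector [x1, x2, x3, x4] :: ('a::zero)^4) $ 1 = x1"
  "(vector [x1, x2, x3, x4] :: ('a::zero)^4) $ 2 = x2"
  "(vector [x1, x2, x3, x4] :: ('a::zero)^4) $ 3 = x3"
  "(vector [x1, x2, x3, x4] :: ('a::zero)^4) $ 4 = x4"
  unfolding vector_def by simp_all

lemma vector_6 [simp]:
  "(vector [x1, x2, x3, x4, x5, x6] :: ('a::zero)^6) $ 1 = x1"
  "(vector [x1, x2, x3, x4, x5, x6] :: ('a::zero)^6) $ 2 = x2"
  "(vector [x1, x2, x3, x4, x5, x6] :: ('a::zero)^6) $ 3 = x3"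
  "(vector [x1, x2, x3, x4, x5, x6] :: ('a::zero)^6) $ 4 = x4"
  "(vector [x1, x2, x3, x4, x5, x6] :: ('a::zero)^6) $ 5 = x5"
  "(vector [x1, x2, x3, x4, x5, x6] :: ('a::zero)^6) $ 6 = x6"
  unfolding vector_def by simp_all

lemma exhaust_6:
  fixes x :: 6
  shows "x = 1 \<or> x = 2 \<or> x = 3 \<or> x = 4 \<or> x = 5 \<or> x = 6"
proof (induct x)
  case (of_int z)
  then have "z = 0 \<or> z = 1 \<or> z = 2 \<or> z = 3 \<or> z = 4 \<or> z = 5" by fastforce
  then show ?case by auto
qed

lemma forall_6: "(\<forall>i::6. P i) \<longleftrightarrow> P 1 \<and> P 2 \<and> P 3 \<and> P 4 \<and> P 5 \<and> P 6"
  by (metis exhaust_6)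

lemma det_4:
  "det (A::'a::comm_ring_1^4^4) =
     A$1$1*A$2$2*A$3$3*A$4$4 - A$1$1*A$2$2*A$3$4*A$4$3 - A$1$1*A$2$3*A$3$2*A$4$4
   + A$1$1*A$2$3*A$3$4*A$4$2 + A$1$1*A$2$4*A$3$2*A$4$3 - A$1$1*A$2$4*A$3$3*A$4$2
   - A$1$2*A$2$1*A$3$3*A$4$4 + A$1$2*A$2$1*A$3$4*A$4$3 + A$1$2*A$2$3*A$3$1*A$4$4
   - A$1$2*A$2$3*A$3$4*A$4$1 - A$1$2*A$2$4*A$3$1*A$4$3 + A$1$2*A$2$4*A$3$3*A$4$1
   + A$1$3*A$2$1*A$3$2*A$4$4 - A$1$3*A$2$1*A$3$4*A$4$2 - A$1$3*A$2$2*A$3$1*A$4$4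
   + A$1$3*A$2$2*A$3$4*A$4$1 + A$1$3*A$2$4*A$3$1*A$4$2 - A$1$3*A$2$4*A$3$2*A$4$1
   - A$1$4*A$2$1*A$3$2*A$4$3 + A$1$4*A$2$1*A$3$3*A$4$2 + A$1$4*A$2$2*A$3$1*A$4$3
   - A$1$4*A$2$2*A$3$3*A$4$1 - A$1$4*A$2$3*A$3$1*A$4$2 + A$1$4*A$2$3*A$3$2*A$4$1"
proof -
  have f1234: "finite {2::4, 3, 4}" "1 \<notin> {2::4, 3, 4}" by auto
  have f234: "finite {3::4, 4}" "2 \<notin> {3::4, 4}" by auto
  have f34: "finite {4::4}" "3 \<notin> {4::4}" by auto
  show ?thesis
    unfolding det_def UNIV_4
    unfolding sum_over_permutations_insert[OF f1234]
    unfolding sum_over_permutations_insert[OF f234]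
    unfolding sum_over_permutations_insert[OF f34]
    unfolding permutes_sing
    by (simp add: sign_swap_id permutation_swap_id permutation_compose sign_compose sign_id
        swap_id_eq algebra_simps)
qed

lemma det4_expand:
  "det4 a b c d =
     a$1*b$2*c$3*d$4 - a$1*b$2*c$4*d$3 - a$1*b$3*c$2*d$4 + a$1*b$3*c$4*d$2
   + a$1*b$4*c$2*d$3 - a$1*b$4*c$3*d$2 - a$2*b$1*c$3*d$4 + a$2*b$1*c$4*d$3
   + a$2*b$3*c$1*d$4 - a$2*b$3*c$4*d$1 - a$2*b$4*c$1*d$3 + a$2*b$4*c$3*d$1
   + a$3*b$1*c$2*d$4 - a$3*b$1*c$4*d$2 - a$3*b$2*c$1*d$4 + a$3*b$2*c$4*d$1
   + a$3*b$4*c$1*d$2 - a$3*b$4*c$2*d$1 - a$4*b$1*c$2*d$3 + a$4*b$1*c$3*d$2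
   + a$4*b$2*c$1*d$3 - a$4*b$2*c$3*d$1 - a$4*b$3*c$1*d$2 + a$4*b$3*c$2*d$1"
  unfolding det4_def det_4 by (simp add: algebra_simps)

lemma det4_add:
  "det4 (a + a') b c d = det4 a b c d + det4 a' b c d"
  "det4 a (b + b') c d = det4 a b c d + det4 a b' c d"
  "det4 a b (c + c') d = det4 a b c d + det4 a b c' d"
  "det4 a b c (d + d') = det4 a b c d + det4 a b c d'"
  by (simp_all add: det4_expand algebra_simps)

lemma det4_diff:
  "det4 (a - a') b c d = det4 a b c d - det4 a' b c d"
  "det4 a (b - b') c d = det4 a b c d - det4 a b' c d"
  "det4 a b (c - c') d = det4 a b c d - det4 a b c' d"
  "det4 a b c (d - d') = det4 a b c d - det4 a b c d'"
  by (simp_all add: det4_expand algebra_simps)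

lemma det4_minus:
  "det4 (- a) b c d = - det4 a b c d"
  "det4 a (- b) c d = - det4 a b c d"
  "det4 a b (- c) d = - det4 a b c d"
  "det4 a b c (- d) = - det4 a b c d"
  by (simp_all add: det4_expand algebra_simps)

lemma det4_smult:
  "det4 (k *s a) b c d = k * det4 a b c d"
  "det4 a (k *s b) c d = k * det4 a b c d"
  "det4 a b (k *s c) d = k * det4 a b c d"
  "det4 a b c (k *s d) = k * det4 a b c d"
  by (simp_all add: det4_expand algebra_simps)

lemma det4_zero:
  "det4 0 b c d = 0" "det4 a 0 c d = 0" "det4 a b 0 d = 0" "det4 a b c 0 = 0"
  by (simp_all add: det4_expand)

lemma det4_same:
  "det4 a a c d = 0" "det4 a b a d = 0" "det4 a b c a = 0"
  "det4 a b b d = 0" "det4 a b c b = 0" "det4 a b c c = 0"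
  by (simp_all add: det4_expand algebra_simps)

lemmas det4_simps = det4_add det4_diff det4_minus det4_smult det4_zero det4_same

lemma det4_swap_12: "det4 a b c d = - det4 b a c d"
  by (simp add: det4_expand algebra_simps)

lemma det4_swap_34: "det4 a b c d = - det4 a b d c"
  by (simp add: det4_expand algebra_simps)

lemma det4_swap_pairs: "det4 a b c d = det4 c d a b"
  by (simp add: det4_expand algebra_simps)

lemma det4_rotate_234: "det4 a b c d = det4 a c d b"
  by (simp add: det4_expand algebra_simps)

lemma det4_rotate_123: "det4 a b c d = det4 c a b d"
  by (simp add: det4_expand algebra_simps)

lemma det4_sum:
  "det4 (\<Sum>i\<in>S. f i) b c d = (\<Sum>i\<in>S. det4 (f i) b c d)"
  "det4 a (\<Sum>i\<in>S. f i) c d = (\<Sum>i\<in>S. det4 a (f i) c d)"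
  "det4 a b c (\<Sum>i\<in>S. f i) = (\<Sum>i\<in>S. det4 a b c (f i))"
  by (induction S rule: infinite_finite_induct) (simp_all add: det4_simps)

lemma det4_cramer_relation:
  fixes P1 P2 P3 P4 P5 :: "'a::comm_ring_1^4"
  shows "det4 P2 P3 P4 P5 *s P1 - det4 P1 P3 P4 P5 *s P2 + det4 P1 P2 P4 P5 *s P3
        - det4 P1 P2 P3 P5 *s P4 + det4 P1 P2 P3 P4 *s P5 = 0"
  unfolding vec_eq_iff forall_4 det4_expand
  by (simp add: vector_scalar_mult_def algebra_simps)

lemma det4_cramer_expansion:
  fixes P Q R S w :: "'a::field^4"
  assumes D: "det4 P Q R S \<noteq> 0"
  shows "w = (det4 w Q R S / det4 P Q R S) *s P - (det4 w P R S / det4 P Q R S) *s Q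
           + (det4 w P Q S / det4 P Q R S) *s R - (det4 w P Q R / det4 P Q R S) *s S"
  unfolding vec_eq_iff
proof (rule allI)
  fix i
  have "det4 P Q R S * w $ i
      = det4 w Q R S * P $ i - det4 w P R S * Q $ i + det4 w P Q S * R $ i - det4 w P Q R * S $ i"
    using arg_cong[OF det4_cramer_relation[of P Q R S w], of "\<lambda>v. v $ i"]
    by (simp add: det4_swap_12[of w] det4_rotate_123 algebra_simps)
  then have "w $ i = (det4 w Q R S * P $ i - det4 w P R S * Q $ i + det4 w P Q S * R $ i
      - det4 w P Q R * S $ i) / det4 P Q R S"
    using D by (simp add: eq_divide_eq mult.commute)
  then show "w $ i = ((det4 w Q R S / det4 P Q R S) *s P - (det4 w P R S / det4 P Q R S) *s Q
           + (det4 w P Q S / det4 P Q R S) *s R - (det4 w P Q R / det4 P Q R S) *s S) $ i"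
    by (simp add: add_divide_distrib diff_divide_distrib)
qed

lemma det4_line_meets_plane:
  "det4 A B Q R *s P - det4 A B P R *s Q + det4 A B P Q *s R = (- det4 B P Q R) *s A + det4 A P Q R *s B"
  using det4_cramer_relation[of B P Q R A] unfolding vec_eq_iff
  by (auto simp: algebra_simps)

definition bracket :: "'a::comm_ring_1^6 \<Rightarrow> 'a^4 \<Rightarrow> 'a^4 \<Rightarrow> 'a" where
  "bracket p C D = (let q = pl C D in
     p$1 * q$6 - p$2 * q$5 + p$3 * q$4 + p$4 * q$3 - p$5 * q$2 + p$6 * q$1)"

lemma det4_eq_bracket: "det4 A B C D = bracket (pl A B) C D"
  unfolding det4_expand bracket_def pl_def Let_def by (simp add: algebra_simps)

lemma bracket_smult: "bracket (k *s p) C D = k * bracket p C D"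
  unfolding bracket_def Let_def by (simp add: algebra_simps)

lemma bracket_zero [simp]: "bracket 0 C D = 0"
  unfolding bracket_def Let_def by simp

lemma bracket_add: "bracket (p + p') C D = bracket p C D + bracket p' C D"
  unfolding bracket_def Let_def by (simp add: algebra_simps)

lemma continuous_on_bracket: "continuous_on UNIV (\<lambda>p::real^6. bracket p C D)"
  unfolding bracket_def Let_def by (intro continuous_intros)

lemma pl_add_left: "pl (A + A') B = pl A B + pl A' B"
  unfolding pl_def Let_def vec_eq_iff forall_6 by (simp add: algebra_simps)

lemma pl_smult_left: "pl (k *s A) B = k *s pl A B"
  unfolding pl_def Let_def vec_eq_iff forall_6 by (simp add: algebra_simps)

lemma pl_swap: "pl A B = - pl B A"
  unfolding pl_def Let_def vec_eq_iff forall_6 by (simp add: algebra_simps)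

lemma pl_minus_right: "pl A (- B) = - pl A B"
  unfolding pl_def Let_def vec_eq_iff forall_6 by (simp add: algebra_simps)

lemma pl_lincomb: "pl (a *s A + b *s B) (c *s A + d *s B) = (a * d - b * c) *s pl A B"
  unfolding pl_def Let_def vec_eq_iff forall_6 by (simp add: algebra_simps)

lemma pl_component: "\<exists>a b. \<forall>A B. pl A B $ m = A $ a * B $ b - A $ b * B $ a"
  using exhaust_6[of m] unfolding pl_def Let_def by (elim disjE) (simp, blast)+

lemma det4_pluecker_relation:
  fixes A B P Q R S :: "'a::comm_ring_1^4"
  shows "det4 A B P Q * det4 A B R S - det4 A B P R * det4 A B Q S + det4 A B P S * det4 A B Q R = 0"
proof -
  have "det4 A B (det4 B P Q R *s A - det4 A P Q R *s B + det4 A B Q R *s P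
        - det4 A B P R *s Q + det4 A B P Q *s R) S = det4 A B 0 S"
    using det4_cramer_relation[of B P Q R A] by simp
  then show ?thesis
    by (simp add: det4_simps algebra_simps)
qed

lemma cvec_add: "cvec (a + b) = cvec a + cvec b"
  unfolding cvec_def by (simp add: vec_eq_iff)

lemma cvec_smult: "cvec (c *s v) = complex_of_real c *s cvec v"
  unfolding cvec_def by (simp add: vec_eq_iff)

lemma cvec_component [simp]: "cvec v $ i = complex_of_real (v $ i)"
  unfolding cvec_def by simp

lemma cvec_eq_0_iff [simp]: "cvec p = 0 \<longleftrightarrow> p = 0"
  unfolding cvec_def by (simp add: vec_eq_iff)

lemma pl_cvec: "pl (cvec A) (cvec B) = cvec (pl A B)"
  unfolding pl_def Let_def vec_eq_iff forall_6 by simp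

lemma det4_cvec: "det4 (cvec a) (cvec b) (cvec c) (cvec d) = complex_of_real (det4 a b c d)"
  unfolding det4_expand by simp

lemma bracket_cvec: "bracket (cvec p) (cvec C) (cvec D) = complex_of_real (bracket p C D)"
  unfolding bracket_def Let_def pl_cvec by simp

lemma cvec_GrR: "p \<in> GrR \<Longrightarrow> cvec p \<in> GrC"
  unfolding GrR_def GrC_def by (auto simp flip: pl_cvec) (metis cvec_eq_0_iff pl_cvec)

lemma bracket_section_eq: "bracket_section Z i j = {q \<in> GrC. bracket q (cvec (Z i)) (cvec (Z j)) = 0}"
  unfolding bracket_section_def GrC_def by (auto simp: det4_eq_bracket)

section \<open>Polynomial functions\<close>

lemma poly_fun_diff: "f \<in> poly_fun \<Longrightarrow> g \<in> poly_fun \<Longrightarrow> (\<lambda>p. f p - g p) \<in> poly_fun"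
  using pf_add[OF _ pf_mult[OF pf_const[of "-1"]], of f g] by simp

lemma poly_fun_bracket: "(\<lambda>p. bracket p C D) \<in> poly_fun"
  unfolding bracket_def Let_def by (intro pf_add poly_fun_diff pf_mult pf_coord pf_const)

lemma poly_fun_prod: "finite S \<Longrightarrow> (\<And>x. x \<in> S \<Longrightarrow> f x \<in> poly_fun) \<Longrightarrow> (\<lambda>p. \<Prod>x\<in>S. f x p) \<in> poly_fun"
  by (induction S rule: finite_induct) (auto intro: pf_mult pf_const[of 1, simplified])

lemma zariski_closure_Gr_least: "zariski_closed_Gr T \<Longrightarrow> S \<subseteq> T \<Longrightarrow> zariski_closure_Gr S \<subseteq> T"
  unfolding zariski_closure_Gr_def by blast

definition separately_polynomial :: "((nat \<Rightarrow> complex) \<Rightarrow> complex) \<Rightarrow> bool" where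
  "separately_polynomial h \<longleftrightarrow> (\<forall>t m. \<exists>p. \<forall>s. h (t(m := s)) = poly p s)"

lemma separately_polynomial_const: "separately_polynomial (\<lambda>t. c)"
  unfolding separately_polynomial_def by (intro allI exI[of _ "[:c:]"]) simp

lemma separately_polynomial_var: "separately_polynomial (\<lambda>t. t k)"
  unfolding separately_polynomial_def
proof (intro allI)
  fix t :: "nat \<Rightarrow> complex" and m
  show "\<exists>p. \<forall>s. (t(m := s)) k = poly p s"
    by (cases "m = k") (auto intro: exI[of _ "[:0, 1:]"] exI[of _ "[:t k:]"])
qed

lemma separately_polynomial_combine:
  assumes "separately_polynomial f" "separately_polynomial g"
    and F: "\<And>p q. \<exists>r. \<forall>s. F (poly p s) (poly q s) = poly r s"
  shows "separately_polynomial (\<lambda>t. F (f t) (g t))"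
  unfolding separately_polynomial_def
proof (intro allI)
  fix t :: "nat \<Rightarrow> complex" and m
  obtain p q where "\<And>s. f (t(m := s)) = poly p s" "\<And>s. g (t(m := s)) = poly q s"
    using assms(1,2) unfolding separately_polynomial_def by meson
  then show "\<exists>r. \<forall>s. F (f (t(m := s))) (g (t(m := s))) = poly r s"
    using F[of p q] by simp
qed

lemma separately_polynomial_add:
  "separately_polynomial f \<Longrightarrow> separately_polynomial g \<Longrightarrow> separately_polynomial (\<lambda>t. f t + g t)"
  using separately_polynomial_combine[of f g "(+)"] by (metis poly_add)

lemma separately_polynomial_mult:
  "separately_polynomial f \<Longrightarrow> separately_polynomial g \<Longrightarrow> separately_polynomial (\<lambda>t. f t * g t)"
  using separately_polynomial_combine[of f g "(*)"] by (metis poly_mult)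

lemma separately_polynomial_diff:
  "separately_polynomial f \<Longrightarrow> separately_polynomial g \<Longrightarrow> separately_polynomial (\<lambda>t. f t - g t)"
  using separately_polynomial_combine[of f g "(-)"] by (metis poly_diff)

lemma separately_polynomial_poly_fun:
  assumes "f \<in> poly_fun" and G: "\<And>i. separately_polynomial (\<lambda>t. G t $ i)"
  shows "separately_polynomial (\<lambda>t. f (G t))"
  using assms(1)
  by induction (auto intro: separately_polynomial_const separately_polynomial_add
      separately_polynomial_mult G)

text \<open>A polynomial in one variable with infinitely many roots vanishes; apply this to one
  variable at a time.\<close>
lemma separately_polynomial_eq_0:
  assumes h: "separately_polynomial h" and S: "\<And>m. m < N \<Longrightarrow> infinite (S m)"
    and vanish: "\<And>t. (\<And>m. m < N \<Longrightarrow> t m \<in> S m) \<Longrightarrow> h t = 0"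
  shows "h t = 0"
proof -
  have "\<forall>t. (\<forall>m. K \<le> m \<and> m < N \<longrightarrow> t m \<in> S m) \<longrightarrow> h t = 0" if "K \<le> N" for K
    using that
  proof (induction K)
    case 0
    then show ?case using vanish by auto
  next
    case (Suc K)
    show ?case
    proof (intro allI impI)
      fix t :: "nat \<Rightarrow> complex"
      assume t: "\<forall>m. Suc K \<le> m \<and> m < N \<longrightarrow> t m \<in> S m"
      obtain p where p: "\<And>s. h (t(K := s)) = poly p s"
        using h unfolding separately_polynomial_def by blast
      have "S K \<subseteq> {x. poly p x = 0}"
      proof
        fix x assume "x \<in> S K"
        then have "h (t(K := x)) = 0"
          using Suc.IH[rule_format, of "t(K := x)"] Suc.prems t by auto
        then show "x \<in> {x. poly p x = 0}" by (simp add: p)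
      qed
      moreover have "infinite (S K)"
        using S Suc.prems by simp
      ultimately have "p = 0"
        using poly_roots_finite finite_subset by blast
      then show "h t = 0"
        using p[of "t K"] by simp
    qed
  qed
  from this[OF order_refl] show ?thesis by auto
qed

lemma infinite_image_of_real_halfline:
  assumes "e \<noteq> 0"
  shows "infinite (complex_of_real ` {x. 0 < e * x})"
proof -
  have "{x. 0 < e * x} = (if e > 0 then {0<..} else {..<0})"
    using assms by (auto simp: zero_less_mult_iff)
  then have "infinite {x. 0 < e * x}"
    using infinite_Ioi[of "0::real"] infinite_Iio[of "0::real"] by simp
  moreover have "inj_on complex_of_real {x. 0 < e * x}"
    by (simp add: inj_on_def)
  ultimately show ?thesis
    by (simp add: finite_image_iff)
qed

section \<open>Lines meeting a line\<close>

definition line_meeting :: "'a::comm_ring_1^4 \<Rightarrow> 'a^4 \<Rightarrow> 'a^4 \<Rightarrow> 'a^4 \<Rightarrow> (nat \<Rightarrow> 'a) \<Rightarrow> 'a^6" where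
  "line_meeting P Q R S t = pl (t 0 *s P + t 1 *s Q) (t 2 *s P + t 3 *s Q + t 4 *s R + t 5 *s S)"

lemma separately_polynomial_line_meeting:
  "separately_polynomial (\<lambda>t. line_meeting (P::complex^4) Q R S t $ m)"
proof -
  obtain a b where ab: "\<And>A B :: complex^4. pl A B $ m = A $ a * B $ b - A $ b * B $ a"
    using pl_component by blast
  show ?thesis
    unfolding line_meeting_def ab
    by (simp only: vector_add_component vector_smult_component)
      (intro separately_polynomial_diff separately_polynomial_mult separately_polynomial_add
        separately_polynomial_var separately_polynomial_const)
qed

lemma line_meeting_cvec:
  "line_meeting (cvec P) (cvec Q) (cvec R) (cvec S) (\<lambda>m. complex_of_real (t m)) = cvec (line_meeting P Q R S t)"
  unfolding line_meeting_def pl_cvec[symmetric] by (simp add: cvec_add cvec_smult)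

lemma line_meeting_cong: "(\<And>m. m < 6 \<Longrightarrow> t m = t' m) \<Longrightarrow> line_meeting P Q R S t = line_meeting P Q R S t'"
  unfolding line_meeting_def by simp

lemma pl_eq_pl_lincomb:
  fixes A B :: "'a::field^4"
  assumes "l \<noteq> 0 \<or> m \<noteq> 0"
  obtains w where "pl A B = pl (l *s A + m *s B) w"
proof (cases "l = 0")
  case False
  have "pl (l *s A + m *s B) (0 *s A + (1 / l) *s B) = pl A B"
    unfolding pl_lincomb using False by simp
  then show ?thesis
    using that by (metis add_0 vector_smult_lzero)
next
  case True
  then have "m \<noteq> 0" using assms by simp
  have "pl (l *s A + m *s B) ((- 1 / m) *s A + 0 *s B) = pl A B"
    unfolding pl_lincomb using True \<open>m \<noteq> 0\<close> by simp
  then show ?thesis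
    using that by (metis add.right_neutral vector_smult_lzero)
qed

lemma obtain_meeting_point:
  fixes A B P Q R S :: "'a::field^4"
  assumes meet: "det4 A B P Q = 0" and D: "det4 P Q R S \<noteq> 0"
  obtains a b w where "pl A B = pl (a *s P + b *s Q) w"
proof -
  have line_point: "det4 B P Q Y *s A + (- det4 A P Q Y) *s B = (- det4 A B Q Y) *s P + det4 A B P Y *s Q" for Y
    using det4_cramer_relation[of B P Q Y A] meet unfolding vec_eq_iff by (auto simp: algebra_simps)
  consider Y where "det4 B P Q Y \<noteq> 0 \<or> det4 A P Q Y \<noteq> 0"
    | "det4 B P Q R = 0" "det4 B P Q S = 0"
    by blast
  then show ?thesis
  proof cases
    case 1
    then have "det4 B P Q Y \<noteq> 0 \<or> - det4 A P Q Y \<noteq> 0"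
      by simp
    then obtain w where "pl A B = pl (det4 B P Q Y *s A + (- det4 A P Q Y) *s B) w"
      by (rule pl_eq_pl_lincomb[of _ _ A B])
    then show ?thesis
      unfolding line_point by (rule that)
  next
    case 2
    have "B = (det4 B Q R S / det4 P Q R S) *s P + (- det4 B P R S / det4 P Q R S) *s Q"
      using det4_cramer_expansion[OF D, of B] 2 by (simp add: scalar_mult_eq_scaleR)
    moreover have "pl A B = pl B (- A)"
      by (simp add: pl_swap[of A B] pl_minus_right)
    ultimately show ?thesis
      using that by metis
  qed
qed

lemma obtain_line_meeting:
  fixes A B P Q R S :: "'a::field^4"
  assumes meet: "det4 A B P Q = 0" and D: "det4 P Q R S \<noteq> 0"
  obtains t where "pl A B = line_meeting P Q R S t"
proof -
  obtain a b w where AB: "pl A B = pl (a *s P + b *s Q) w"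
    using obtain_meeting_point[OF assms] .
  let ?c = "\<lambda>X. X / det4 P Q R S"
  have "pl A B = line_meeting P Q R S
      ((!) [a, b, ?c (det4 w Q R S), - ?c (det4 w P R S), ?c (det4 w P Q S), - ?c (det4 w P Q R)])"
    unfolding line_meeting_def AB
    by (subst det4_cramer_expansion[OF D, of w]) (simp add: scalar_mult_eq_scaleR)
  then show ?thesis ..
qed

section \<open>Totally nonnegative 2 x n matrices\<close>

lemma minor2_swap: "minor2 x1 x2 i j = - minor2 x1 x2 j i"
  unfolding minor2_def by simp

lemma minor2_self [simp]: "minor2 x1 x2 i i = 0"
  unfolding minor2_def by simp

lemma minor2_eq_0_through_nonzero_column:
  assumes "minor2 x1 x2 i q = 0" "minor2 x1 x2 j q = 0" "x1 q \<noteq> 0 \<or> x2 q \<noteq> 0"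
  shows "minor2 x1 x2 i j = 0"
proof -
  have "x1 q * minor2 x1 x2 i j = x1 j * minor2 x1 x2 i q - x1 i * minor2 x1 x2 j q"
       "x2 q * minor2 x1 x2 i j = x2 j * minor2 x1 x2 i q - x2 i * minor2 x1 x2 j q"
    unfolding minor2_def by (simp_all add: algebra_simps)
  then show ?thesis using assms by auto
qed

lemma minor2_kernel_sum:
  assumes "(\<Sum>k\<in>K. u k * x1 k) = 0" "(\<Sum>k\<in>K. u k * x2 k) = 0"
  shows "(\<Sum>k\<in>K. u k * minor2 x1 x2 k q) = 0"
proof -
  have "(\<Sum>k\<in>K. u k * minor2 x1 x2 k q) = x2 q * (\<Sum>k\<in>K. u k * x1 k) - x1 q * (\<Sum>k\<in>K. u k * x2 k)"
    unfolding minor2_def sum_distrib_left sum_subtractf[symmetric]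
    by (rule sum.cong) (auto simp: algebra_simps)
  then show ?thesis
    using assms by simp
qed

lemma TNN2_sign:
  assumes "TNN2 n x1 x2"
  obtains \<rho> :: real where "\<rho> = 1 \<or> \<rho> = -1"
    "\<And>i j. 1 \<le> i \<Longrightarrow> i < j \<Longrightarrow> j \<le> n \<Longrightarrow> \<rho> * minor2 x1 x2 i j \<ge> 0"
proof -
  from assms consider
      "\<forall>i j. 1 \<le> i \<and> i < j \<and> j \<le> n \<longrightarrow> minor2 x1 x2 i j \<ge> 0"
    | "\<forall>i j. 1 \<le> i \<and> i < j \<and> j \<le> n \<longrightarrow> minor2 x1 x2 i j \<le> 0"
    unfolding TNN2_def by blast
  then show ?thesis
    by cases (auto intro: that[of 1] that[of "-1"])
qed

lemma TNN2_smult_left: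
  assumes "c \<noteq> 0" "TNN2 n x1 x2"
  shows "TNN2 n (\<lambda>k. c * x1 k) x2"
proof -
  have m: "minor2 (\<lambda>k. c * x1 k) x2 i j = c * minor2 x1 x2 i j" for i j
    unfolding minor2_def by (simp add: algebra_simps)
  show ?thesis
    using assms unfolding TNN2_def m
    by (cases "c > 0") (auto simp: mult_le_0_iff zero_le_mult_iff)
qed

lemma obtain_separating_element:
  fixes N :: "nat set"
  assumes "finite N" "N \<noteq> {}"
  obtains q where "q \<in> N" "\<And>k. k \<in> N \<Longrightarrow> k < q \<Longrightarrow> k \<le> m" "\<And>k. k \<in> N \<Longrightarrow> q < k \<Longrightarrow> m < k"
proof (cases "N \<inter> {..m} = {}")
  case True
  show ?thesis
    by (rule that[of "Min N"]) (use assms True in \<open>auto simp: not_le\<close>)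
next
  case False
  let ?q = "Max (N \<inter> {..m})"
  have "?q \<in> N \<inter> {..m}"
    using False assms by (intro Max_in) auto
  moreover have "m < k" if "k \<in> N" "?q < k" for k
  proof (rule ccontr)
    assume "\<not> m < k"
    then have "k \<le> ?q"
      using that assms(1) by (intro Max_ge) auto
    then show False using that by simp
  qed
  ultimately show ?thesis
    by (intro that[of ?q]) auto
qed

text \<open>The variation-diminishing property of totally nonnegative matrices, for one sign change:
  testing the kernel relation against a column q that separates the nonzero columns of the
  positive and the negative part of u yields a sum of nonnegative terms.\<close>
lemma TNN2_kernel_no_single_sign_change:
  fixes u x1 x2 :: "nat \<Rightarrow> real"
  assumes tnn: "TNN2 n x1 x2"
    and ker: "(\<Sum>k=1..n. u k * x1 k) = 0" "(\<Sum>k=1..n. u k * x2 k) = 0"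
    and pos: "\<And>k. 1 \<le> k \<Longrightarrow> k \<le> m \<Longrightarrow> u k > 0"
    and neg: "\<And>k. m < k \<Longrightarrow> k \<le> n \<Longrightarrow> u k < 0"
  shows False
proof -
  obtain \<rho> :: real where \<rho>: "\<rho> = 1 \<or> \<rho> = -1"
    and \<rho>_minor: "\<And>i j. 1 \<le> i \<Longrightarrow> i < j \<Longrightarrow> j \<le> n \<Longrightarrow> \<rho> * minor2 x1 x2 i j \<ge> 0"
    using TNN2_sign[OF tnn] by blast
  have ker_minor: "(\<Sum>k=1..n. u k * (\<rho> * minor2 x1 x2 k q)) = 0" for q
    using minor2_kernel_sum[OF ker, of q] by (simp add: mult.left_commute flip: sum_distrib_left)
  define N where "N = {k\<in>{1..n}. x1 k \<noteq> 0 \<or> x2 k \<noteq> 0}"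
  have "N \<noteq> {}"
    using tnn unfolding TNN2_def N_def minor2_def by force
  then obtain q where q: "q \<in> N" and before: "\<And>k. k \<in> N \<Longrightarrow> k < q \<Longrightarrow> k \<le> m"
    and after: "\<And>k. k \<in> N \<Longrightarrow> q < k \<Longrightarrow> m < k"
    using obtain_separating_element[of N m] unfolding N_def by auto
  have terms_nonneg: "u k * (\<rho> * minor2 x1 x2 k q) \<ge> 0" if k: "k \<in> {1..n}" for k
  proof -
    consider "k \<notin> N" | "k = q" | "k \<in> N" "k < q" | "k \<in> N" "q < k"
      by linarith
    then show ?thesis
    proof cases
      case 1
      then show ?thesis using k unfolding N_def minor2_def by simp
    next
      case 3
      then show ?thesis using pos[of k] before[of k] \<rho>_minor[of k q] k q unfolding N_def by simp
    next
      case 4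
      then have "u k < 0" "\<rho> * minor2 x1 x2 q k \<ge> 0"
        using neg[of k] after[of k] \<rho>_minor[of q k] k q unfolding N_def by auto
      then show ?thesis by (simp add: minor2_swap[of x1 x2 k q] mult_nonpos_nonneg)
    qed simp
  qed
  have "u k * (\<rho> * minor2 x1 x2 k q) = 0" if "k \<in> {1..n}" for k
    using sum_nonneg_eq_0_iff[of "{1..n}" "\<lambda>k. u k * (\<rho> * minor2 x1 x2 k q)"]
      ker_minor[of q] terms_nonneg that by blast
  moreover have "u k \<noteq> 0" if "k \<in> {1..n}" for k
    using pos[of k] neg[of k] that by (cases "k \<le> m") auto
  moreover have "\<rho> \<noteq> 0" using \<rho> by auto
  ultimately have "minor2 x1 x2 k q = 0" if "k \<in> {1..n}" for k
    using that by simp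
  with q have "minor2 x1 x2 i j = 0" if "1 \<le> i" "i < j" "j \<le> n" for i j
    using that by (intro minor2_eq_0_through_nonzero_column[of x1 x2 i q j]) (auto simp: N_def)
  then show False
    using tnn unfolding TNN2_def by auto
qed

lemma TNN2_adjacent_support:
  assumes i: "1 \<le> i" "i < n" and ab: "a > 0" "b > 0"
    and before: "\<And>k. k \<le> i \<Longrightarrow> x2 k \<le> 0" and after: "\<And>k. i < k \<Longrightarrow> x2 k \<ge> 0"
    and x2_succ: "x2 (i + 1) > 0"
  shows "TNN2 n (\<lambda>k. (if k = i then a else 0) + (if k = i + 1 then b else 0)) x2"
proof -
  let ?x1 = "\<lambda>k. (if k = i then a else 0) + (if k = i + 1 then b else 0)"
  have "b * x2 i \<le> 0" "a * x2 (i + 1) > 0"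
    using ab x2_succ before[of i] by (simp_all add: mult_nonneg_nonpos)
  then have "minor2 ?x1 x2 i (i + 1) > 0"
    by (simp add: minor2_def)
  moreover have "minor2 ?x1 x2 k l \<ge> 0" if "k < l" for k l
  proof -
    have "?x1 k * x2 l \<ge> 0" "?x1 l * x2 k \<le> 0"
      using that ab before[of k] after[of l] by (auto simp: mult_nonneg_nonpos)
    then show ?thesis unfolding minor2_def by simp
  qed
  ultimately show ?thesis
    unfolding TNN2_def using i by (intro conjI disjI1 exI[of _ i] exI[of _ "i + 1"]) auto
qed

lemma TNN2_end_support:
  assumes n: "1 < n" and ac: "a > 0" "c < 0"
    and x2_nonneg: "\<And>k. x2 k \<ge> 0" and x2_1: "x2 1 > 0"
  shows "TNN2 n (\<lambda>k. (if k = 1 then a else 0) + (if k = n then c else 0)) x2"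
proof -
  let ?x1 = "\<lambda>k. (if k = 1 then a else 0) + (if k = n then c else 0)"
  have "c * x2 1 < 0" "a * x2 n \<ge> 0"
    using ac x2_1 x2_nonneg[of n] by (simp_all add: mult_neg_pos)
  then have "minor2 ?x1 x2 1 n > 0"
    using n by (simp add: minor2_def)
  moreover have "minor2 ?x1 x2 k l \<ge> 0" if "1 \<le> k" "k < l" "l \<le> n" for k l
  proof -
    have "?x1 k * x2 l \<ge> 0" "?x1 l * x2 k \<le> 0"
      using that ac x2_nonneg[of k] x2_nonneg[of l] by (auto simp: mult_nonpos_nonneg)
    then show ?thesis unfolding minor2_def by simp
  qed
  ultimately show ?thesis
    unfolding TNN2_def using n by (intro conjI disjI1 exI[of _ 1] exI[of _ n]) auto
qed

lemma TNN2_three_term_support: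
  assumes i: "1 < i" "i < j" "i \<le> n"
    and x1: "\<alpha> \<ge> 0" "\<beta> > 0" "\<gamma> \<ge> 0" and x2: "\<alpha>' > 0" "\<delta> \<le> 0" "\<epsilon> \<le> 0"
  shows "TNN2 n (\<lambda>k. (if k = 1 then \<alpha> else 0) + (if k = i then \<beta> else 0) + (if k = i + 1 then \<gamma> else 0))
                (\<lambda>k. (if k = 1 then \<alpha>' else 0) + (if k = j then \<delta> else 0) + (if k = j + 1 then \<epsilon> else 0))"
proof -
  let ?x1 = "\<lambda>k. (if k = 1 then \<alpha> else 0) + (if k = i then \<beta> else 0) + (if k = i + 1 then \<gamma> else 0)"
  let ?x2 = "\<lambda>k. (if k = 1 then \<alpha>' else 0) + (if k = j then \<delta> else 0) + (if k = j + 1 then \<epsilon> else 0)"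
  have "minor2 ?x1 ?x2 1 i < 0"
    using i x1 x2 by (simp add: minor2_def)
  moreover have "minor2 ?x1 ?x2 k l \<le> 0" if "1 \<le> k" "k < l" for k l
  proof -
    have "?x1 k * ?x2 l \<le> 0"
      using that i x1 x2 by (intro mult_nonneg_nonpos) auto
    moreover have "?x1 l * ?x2 k \<ge> 0"
      using that i x1 x2 by (cases "k = 1") auto
    ultimately show ?thesis unfolding minor2_def by simp
  qed
  ultimately show ?thesis
    unfolding TNN2_def using i by (intro conjI disjI2 exI[of _ 1] exI[of _ i]) auto
qed

section \<open>The amplituhedron of a totally positive matrix\<close>

lemma sum_pairs_antisymmetric:
  fixes S :: "nat set" and K :: "nat \<Rightarrow> nat \<Rightarrow> 'a::comm_ring_1"
  assumes fin: "finite S" and K: "\<And>p q. K q p = - K p q" and K_diag: "\<And>p. K p p = 0"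
  shows "(\<Sum>p\<in>S. \<Sum>q\<in>S. a p * b q * K p q) =
         (\<Sum>p\<in>S. \<Sum>q\<in>{q\<in>S. p < q}. (a p * b q - a q * b p) * K p q)"
proof -
  let ?f = "\<lambda>p q. a p * b q * K p q"
  have split: "(\<Sum>q\<in>S. ?f p q) = (\<Sum>q\<in>{q\<in>S. p < q}. ?f p q) + (\<Sum>q\<in>{q\<in>S. q < p}. ?f p q)" for p
  proof -
    have "(\<Sum>q\<in>S. ?f p q) = (\<Sum>q\<in>S. (if p < q then ?f p q else 0) + (if q < p then ?f p q else 0))"
      by (rule sum.cong) (auto simp: K_diag)
    also have "\<dots> = (\<Sum>q\<in>{q\<in>S. p < q}. ?f p q) + (\<Sum>q\<in>{q\<in>S. q < p}. ?f p q)"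
      by (simp add: sum.distrib sum.inter_filter fin)
    finally show ?thesis .
  qed
  have sw: "(\<Sum>p\<in>S. \<Sum>q\<in>{q\<in>S. q < p}. ?f p q) = (\<Sum>q\<in>S. \<Sum>p\<in>{p\<in>S. q < p}. ?f p q)"
    by (rule sum.swap_restrict[OF fin fin])
  have "(\<Sum>p\<in>S. \<Sum>q\<in>S. ?f p q) = (\<Sum>p\<in>S. \<Sum>q\<in>{q\<in>S. p < q}. ?f p q) + (\<Sum>q\<in>S. \<Sum>p\<in>{p\<in>S. q < p}. ?f p q)"
    by (simp add: split sum.distrib sw)
  also have "(\<Sum>q\<in>S. \<Sum>p\<in>{p\<in>S. q < p}. ?f p q) = (\<Sum>p\<in>S. \<Sum>q\<in>{q\<in>S. p < q}. - (a q * b p * K p q))"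
    by (intro sum.cong refl) (metis K minus_minus mult_minus_right)
  also have "(\<Sum>p\<in>S. \<Sum>q\<in>{q\<in>S. p < q}. ?f p q) + (\<Sum>p\<in>S. \<Sum>q\<in>{q\<in>S. p < q}. - (a q * b p * K p q))
      = (\<Sum>p\<in>S. \<Sum>q\<in>{q\<in>S. p < q}. ?f p q + - (a q * b p * K p q))"
    by (simp only: sum.distrib[symmetric])
  also have "\<dots> = (\<Sum>p\<in>S. \<Sum>q\<in>{q\<in>S. p < q}. (a p * b q - a q * b p) * K p q)"
    by (intro sum.cong refl) (simp add: algebra_simps)
  finally show ?thesis .
qed

lemma obtain_sign_changes:
  fixes s :: "nat \<Rightarrow> real"
  assumes s2: "s 2 > 0" and sn: "s n > 0" and j0: "2 \<le> j0" "j0 \<le> n" "s j0 < 0"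
  obtains i j where "2 \<le> i" "i < j" "j < n" "s i \<ge> 0" "s (i + 1) < 0" "s j \<le> 0" "s (j + 1) > 0"
proof -
  define c where "c = (LEAST k. 2 \<le> k \<and> k \<le> n \<and> s k < 0)"
  have c: "2 \<le> c" "c \<le> n" "s c < 0"
    using LeastI[of "\<lambda>k. 2 \<le> k \<and> k \<le> n \<and> s k < 0" j0] j0 unfolding c_def by auto
  have before_c: "s k \<ge> 0" if "2 \<le> k" "k < c" for k
    using not_less_Least[of k "\<lambda>k. 2 \<le> k \<and> k \<le> n \<and> s k < 0"] that c unfolding c_def by auto
  have c_bounds: "3 \<le> c" "c < n"
    using c s2 sn by (auto simp: le_less)
  define d where "d = (LEAST k. c < k \<and> k \<le> n \<and> s k > 0)"
  have d: "c < d" "d \<le> n" "s d > 0"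
    using LeastI[of "\<lambda>k. c < k \<and> k \<le> n \<and> s k > 0" n] c_bounds sn unfolding d_def by auto
  have before_d: "s k \<le> 0" if "c \<le> k" "k < d" for k
    using not_less_Least[of k "\<lambda>k. c < k \<and> k \<le> n \<and> s k > 0"] that c d unfolding d_def
    by (cases "k = c") auto
  show ?thesis
  proof (rule that[of "c - 1" "d - 1"])
    show "s (c - 1) \<ge> 0" using before_c[of "c - 1"] c_bounds by simp
    show "s (d - 1) \<le> 0" using before_d[of "d - 1"] d by simp
  qed (use c c_bounds d in auto)
qed

lemma obtain_small_perturbation:
  fixes f g :: "'a \<Rightarrow> real"
  assumes "finite K" "\<And>k. k \<in> K \<Longrightarrow> f k > 0"
  obtains e where "e > 0" "\<And>k. k \<in> K \<Longrightarrow> f k + e * g k > 0"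
proof -
  have "\<forall>\<^sub>F e in at_right 0. \<forall>k\<in>K. f k + e * g k > 0"
  proof (rule eventually_ball_finite[OF assms(1)], rule ballI)
    fix k assume "k \<in> K"
    have "((\<lambda>e. f k + e * g k) \<longlongrightarrow> f k + 0 * g k) (at_right 0)"
      by (intro tendsto_intros)
    then show "\<forall>\<^sub>F e in at_right 0. f k + e * g k > 0"
      using assms(2)[OF \<open>k \<in> K\<close>] by (intro order_tendstoD(1)) auto
  qed
  then have "\<forall>\<^sub>F e in at_right 0. e > 0 \<and> (\<forall>k\<in>K. f k + e * g k > 0)"
    using eventually_at_right_less[of "0::real"] by (rule eventually_conj[rotated])
  then show ?thesis
    using that eventually_happens'[OF trivial_limit_at_right_real] by blast
qed

lemma not_in_interior_of_GrR:
  assumes approx: "\<And>\<epsilon>. \<epsilon> > 0 \<Longrightarrow> \<exists>q\<in>GrR - S. dist q p < \<epsilon>"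
  shows "p \<notin> (top_of_set GrR) interior_of S"
proof
  assume "p \<in> (top_of_set GrR) interior_of S"
  then obtain V where V: "open V" "p \<in> V" "GrR \<inter> V \<subseteq> S"
    unfolding interior_of_def openin_open by blast
  then obtain \<epsilon> where "\<epsilon> > 0" "ball p \<epsilon> \<subseteq> V"
    using open_contains_ball by blast
  moreover obtain q where "q \<in> GrR" "q \<notin> S" "dist q p < \<epsilon>"
    using approx[OF \<open>\<epsilon> > 0\<close>] by blast
  ultimately show False
    using V(3) by (auto simp: dist_commute)
qed

lemma less_6_cases: "(m::nat) < 6 \<Longrightarrow> m = 0 \<or> m = 1 \<or> m = 2 \<or> m = 3 \<or> m = 4 \<or> m = 5"
  by auto

locale totally_positive_rows =
  fixes n :: nat and Z :: "nat \<Rightarrow> real^4" and \<sigma> :: real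
  assumes n_ge_4: "n \<ge> 4" and \<sigma>: "\<sigma> = 1 \<or> \<sigma> = -1"
    and positive_minors: "\<And>a b c d. 1 \<le> a \<Longrightarrow> a < b \<Longrightarrow> b < c \<Longrightarrow> c < d \<Longrightarrow> d \<le> n \<Longrightarrow>
              \<sigma> * det4 (Z a) (Z b) (Z c) (Z d) > 0"
begin

definition XZ :: "(nat \<Rightarrow> real) \<Rightarrow> real^4" where
  "XZ x = (\<Sum>i=1..n. x i *s Z i)"

definition adjacent :: "nat \<Rightarrow> nat \<Rightarrow> bool" where
  "adjacent r s \<longleftrightarrow> (1 \<le> r \<and> r < n \<and> s = r + 1) \<or> (r = 1 \<and> s = n)"

lemma amplituhedron_eq:
  "amplituhedron n Z = {pl (XZ x1) (XZ x2) | x1 x2. TNN2 n x1 x2 \<and> pl (XZ x1) (XZ x2) \<noteq> 0}"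
  unfolding amplituhedron_def XZ_def scalar_mult_eq_scaleR ..

lemma pl_XZ_in_amplituhedron:
  "TNN2 n x1 x2 \<Longrightarrow> pl (XZ x1) (XZ x2) \<noteq> 0 \<Longrightarrow> pl (XZ x1) (XZ x2) \<in> amplituhedron n Z"
  unfolding amplituhedron_eq by blast

lemma amplituhedron_subset_GrR: "amplituhedron n Z \<subseteq> GrR"
  unfolding amplituhedron_eq GrR_def by blast

lemma XZ_add: "XZ (\<lambda>k. x k + y k) = XZ x + XZ y"
  unfolding XZ_def by (simp add: vector_sadd_rdistrib sum.distrib)

lemma XZ_smult: "XZ (\<lambda>k. c * x k) = c *s XZ x"
  unfolding XZ_def by (simp add: vec_eq_iff sum_distrib_left algebra_simps)

lemma XZ_delta: "a \<in> {1..n} \<Longrightarrow> XZ (\<lambda>k. if k = a then c else 0) = c *s Z a"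
  unfolding XZ_def by (simp add: if_distrib[of "\<lambda>c. c *s _"] sum.delta cong: if_cong)

lemma adjacent_Suc: "1 \<le> i \<Longrightarrow> i < n \<Longrightarrow> adjacent i (i + 1)"
  unfolding adjacent_def by auto

lemma adjacent_1_2: "adjacent 1 2"
  using n_ge_4 unfolding adjacent_def by auto

lemma adjacent_1_n: "adjacent 1 n"
  unfolding adjacent_def by auto

lemma finite_adjacent: "finite {(r, s). adjacent r s}"
  by (rule finite_subset[of _ "{1..n} \<times> {1..n}"]) (use n_ge_4 in \<open>auto simp: adjacent_def\<close>)

lemma det4_XZ_cauchy_binet:
  "det4 (XZ x1) (XZ x2) C E =
   (\<Sum>p\<in>{1..n}. \<Sum>q\<in>{q\<in>{1..n}. p < q}. minor2 x1 x2 p q * det4 (Z p) (Z q) C E)"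
proof -
  have "det4 (XZ x1) (XZ x2) C E = (\<Sum>p\<in>{1..n}. \<Sum>q\<in>{1..n}. x1 p * x2 q * det4 (Z p) (Z q) C E)"
    unfolding XZ_def det4_sum by (simp add: det4_simps sum_distrib_left algebra_simps) (rule sum.swap)
  also have "\<dots> = (\<Sum>p\<in>{1..n}. \<Sum>q\<in>{q\<in>{1..n}. p < q}. minor2 x1 x2 p q * det4 (Z p) (Z q) C E)"
    unfolding minor2_def
    by (rule sum_pairs_antisymmetric) (simp, rule det4_swap_12, simp add: det4_simps)
  finally show ?thesis .
qed

lemma det4_adjacent_sign:
  assumes rs: "adjacent r s" and pq: "1 \<le> p" "p < q" "q \<le> n"
  shows "\<sigma> * det4 (Z p) (Z q) (Z r) (Z s) \<ge> 0"
proof (cases "p = r \<or> p = s \<or> q = r \<or> q = s")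
  case True
  then show ?thesis by (auto simp: det4_same)
next
  case distinct: False
  consider (succ) "1 \<le> r" "r < n" "s = r + 1" | (wrap) "r = 1" "s = n"
    using rs unfolding adjacent_def by blast
  then show ?thesis
  proof cases
    case succ
    consider "q < r" | "p < r" "s < q" | "s < p"
      using distinct succ pq by linarith
    then show ?thesis
    proof cases
      case 1
      then show ?thesis using positive_minors[of p q r s] succ pq by simp
    next
      case 2
      then show ?thesis using positive_minors[of p r s q] succ pq
        by (simp add: det4_rotate_234[of "Z p" "Z q"])
    next
      case 3
      then show ?thesis using positive_minors[of r s p q] succ pq
        by (simp add: det4_swap_pairs[of "Z p" "Z q"])
    qed
  next
    case wrap
    then show ?thesis using positive_minors[of 1 p q n] distinct pq
      by (simp add: det4_rotate_123[of "Z p" "Z q"])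
  qed
qed

lemma amplituhedron_adjacent_sign:
  assumes "p \<in> amplituhedron n Z"
  obtains \<rho> :: real where "\<rho> = 1 \<or> \<rho> = -1" "\<And>r s. adjacent r s \<Longrightarrow> \<rho> * bracket p (Z r) (Z s) \<ge> 0"
proof -
  obtain x1 x2 where p: "p = pl (XZ x1) (XZ x2)" and tnn: "TNN2 n x1 x2"
    using assms unfolding amplituhedron_eq by blast
  obtain \<rho> :: real where \<rho>: "\<rho> = 1 \<or> \<rho> = -1"
    and \<rho>_minor: "\<And>i j. 1 \<le> i \<Longrightarrow> i < j \<Longrightarrow> j \<le> n \<Longrightarrow> \<rho> * minor2 x1 x2 i j \<ge> 0"
    using TNN2_sign[OF tnn] by blast
  show ?thesis
  proof (rule that[of "\<rho> * \<sigma>"])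
    show "\<rho> * \<sigma> = 1 \<or> \<rho> * \<sigma> = -1" using \<rho> \<sigma> by auto
    fix r s assume rs: "adjacent r s"
    have "\<rho> * \<sigma> * bracket p (Z r) (Z s) =
      (\<Sum>i\<in>{1..n}. \<Sum>j\<in>{j\<in>{1..n}. i < j}. (\<rho> * minor2 x1 x2 i j) * (\<sigma> * det4 (Z i) (Z j) (Z r) (Z s)))"
      unfolding p det4_eq_bracket[symmetric] det4_XZ_cauchy_binet sum_distrib_left
      by (intro sum.cong refl) (simp add: ac_simps)
    also have "\<dots> \<ge> 0"
      using \<rho>_minor det4_adjacent_sign[OF rs] by (intro sum_nonneg) simp
    finally show "\<rho> * \<sigma> * bracket p (Z r) (Z s) \<ge> 0" .
  qed
qed

lemma amplituhedron_smult:
  assumes "c \<noteq> 0" "p \<in> amplituhedron n Z"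
  shows "c *s p \<in> amplituhedron n Z"
proof -
  obtain x1 x2 where p: "p = pl (XZ x1) (XZ x2)" "p \<noteq> 0" and tnn: "TNN2 n x1 x2"
    using assms(2) unfolding amplituhedron_eq by blast
  have "c *s p = pl (XZ (\<lambda>k. c * x1 k)) (XZ x2)"
    unfolding XZ_smult pl_smult_left p ..
  moreover have "c *s p \<noteq> 0"
    using assms(1) p(2) by (simp add: vec_eq_iff)
  ultimately show ?thesis
    using pl_XZ_in_amplituhedron[OF TNN2_smult_left[OF assms(1) tnn]] by simp
qed

text \<open>If \<open>\<langle>AB 1j\<rangle> = 0\<close>, the Pluecker relations for \<open>(1, j, 2, j \<plusminus> 1)\<close> force
  \<open>\<langle>AB 1 (j-1)\<rangle>\<close> and \<open>\<langle>AB 1 (j+1)\<rangle>\<close> to have strictly opposite signs.\<close>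
lemma bracket_row_1_nonzero:
  assumes \<tau>: "\<tau> = 1 \<or> \<tau> = -1"
    and adj: "\<And>r s. adjacent r s \<Longrightarrow> \<tau> * det4 A B (Z r) (Z s) > 0"
    and nonneg: "\<And>k. k \<in> {2..n} \<Longrightarrow> \<tau> * det4 A B (Z 1) (Z k) \<ge> 0"
    and j: "3 \<le> j" "j < n"
  shows "det4 A B (Z 1) (Z j) \<noteq> 0"
proof
  define b where "b k l = \<tau> * det4 A B (Z k) (Z l)" for k l
  assume "det4 A B (Z 1) (Z j) = 0"
  then have b1j: "b 1 j = 0"
    unfolding b_def by simp
  have pluecker: "b p q * b r s - b p r * b q s + b p s * b q r = 0" for p q r s
  proof -
    have "b p q * b r s - b p r * b q s + b p s * b q r = \<tau>\<^sup>2 *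
        (det4 A B (Z p) (Z q) * det4 A B (Z r) (Z s) - det4 A B (Z p) (Z r) * det4 A B (Z q) (Z s)
         + det4 A B (Z p) (Z s) * det4 A B (Z q) (Z r))"
      unfolding b_def power2_eq_square by (simp add: algebra_simps)
    then show ?thesis by (simp add: det4_pluecker_relation)
  qed
  have b_swap: "b k l = - b l k" for k l
    unfolding b_def using det4_swap_34[of A B "Z k" "Z l"] by simp
  have "b 1 (j + 1) * b j 2 = b 1 2 * b j (j + 1)"
    using pluecker[of 1 j 2 "j + 1"] b1j b_swap[of j 2] by (simp add: algebra_simps)
  moreover have "b 1 (j - 1) * b j 2 = - (b 1 2 * b (j - 1) j)"
    using pluecker[of 1 j 2 "j - 1"] b1j b_swap[of j 2] b_swap[of j "j - 1"] by (simp add: algebra_simps)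
  ultimately have "b 1 (j + 1) * b 1 (j - 1) * (b j 2)\<^sup>2 = - ((b 1 2)\<^sup>2 * (b j (j + 1) * b (j - 1) j))"
    by (simp add: power2_eq_square) (metis (no_types, lifting) mult.assoc mult.left_commute mult_minus_right)
  moreover have "j + 1 \<in> {2..n}" "j - 1 \<in> {2..n}"
    using j by auto
  then have "b 1 (j + 1) \<ge> 0" "b 1 (j - 1) \<ge> 0"
    using nonneg unfolding b_def by blast+
  then have "b 1 (j + 1) * b 1 (j - 1) * (b j 2)\<^sup>2 \<ge> 0"
    by simp
  moreover have "adjacent (j - 1) j"
    using adjacent_Suc[of "j - 1"] j by simp
  then have "b 1 2 > 0" "b j (j + 1) > 0" "b (j - 1) j > 0"
    using adj adjacent_1_2 adjacent_Suc[of j] j unfolding b_def by auto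
  then have "(b 1 2)\<^sup>2 * (b j (j + 1) * b (j - 1) j) > 0"
    by simp
  ultimately show False by linarith
qed

lemma bracket_row_1_pos:
  assumes \<tau>: "\<tau> = 1 \<or> \<tau> = -1"
    and adj: "\<And>r s. adjacent r s \<Longrightarrow> \<tau> * det4 A B (Z r) (Z s) > 0"
    and nonneg: "\<And>k. k \<in> {2..n} \<Longrightarrow> \<tau> * det4 A B (Z 1) (Z k) \<ge> 0"
    and j: "j \<in> {2..n}"
  shows "\<tau> * det4 A B (Z 1) (Z j) > 0"
proof -
  consider "j = 2" | "j = n" | "3 \<le> j" "j < n"
    using j by force
  then show ?thesis
  proof cases
    case 1
    then show ?thesis using adj[OF adjacent_1_2] by simp
  next
    case 2
    then show ?thesis using adj[OF adjacent_1_n] by simp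
  next
    case 3
    then show ?thesis
      using bracket_row_1_nonzero[OF \<tau> adj nonneg 3] nonneg[OF j] \<tau> by (auto simp: less_le)
  qed
qed

text \<open>Otherwise the vector \<open>u k = -\<tau> \<langle>AB Y k\<rangle>\<close>, for the point \<open>Y = Z 1 + e Z 2\<close>, has a single sign
  change; it lies in the kernel of \<open>(x1; x2)\<close> because \<open>\<langle>AB Y A\<rangle> = \<langle>AB Y B\<rangle> = 0\<close>.\<close>
lemma amplituhedron_bracket_sign_flip:
  assumes tnn: "TNN2 n x1 x2" and \<tau>: "\<tau> = 1 \<or> \<tau> = -1"
    and adj: "\<And>r s. adjacent r s \<Longrightarrow> \<tau> * det4 (XZ x1) (XZ x2) (Z r) (Z s) > 0"
  shows "\<exists>j\<in>{2..n}. \<tau> * det4 (XZ x1) (XZ x2) (Z 1) (Z j) < 0"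
proof (rule ccontr)
  define A where "A = XZ x1"
  define B where "B = XZ x2"
  have adj_AB: "\<tau> * det4 A B (Z r) (Z s) > 0" if "adjacent r s" for r s
    using adj[OF that] unfolding A_def B_def .
  assume "\<not> (\<exists>j\<in>{2..n}. \<tau> * det4 (XZ x1) (XZ x2) (Z 1) (Z j) < 0)"
  then have "\<tau> * det4 A B (Z 1) (Z k) > 0" if "k \<in> {2..n}" for k
    using bracket_row_1_pos[OF \<tau> adj_AB, of k] that unfolding A_def B_def by (simp add: not_less)
  then obtain e where e: "e > 0"
    and e_pos: "\<And>k. k \<in> {2..n} \<Longrightarrow> \<tau> * det4 A B (Z 1) (Z k) + e * (\<tau> * det4 A B (Z 2) (Z k)) > 0"
    using obtain_small_perturbation[of "{2..n}" "\<lambda>k. \<tau> * det4 A B (Z 1) (Z k)"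
        "\<lambda>k. \<tau> * det4 A B (Z 2) (Z k)"] by auto
  define u where "u k = - \<tau> * det4 A B (Z 1 + e *s Z 2) (Z k)" for k
  have u_expand: "u k = - (\<tau> * det4 A B (Z 1) (Z k) + e * (\<tau> * det4 A B (Z 2) (Z k)))" for k
    unfolding u_def by (simp add: det4_simps algebra_simps)
  have "u 1 > 0"
    using u_expand[of 1] e adj_AB[OF adjacent_1_2] det4_swap_34[of A B "Z 2" "Z 1"]
    by (simp add: det4_same)
  moreover have "u k < 0" if "1 < k" "k \<le> n" for k
    using e_pos[of k] that u_expand[of k] by simp
  moreover have "(\<Sum>k=1..n. u k * x k) = - \<tau> * det4 A B (Z 1 + e *s Z 2) (XZ x)" for x
    unfolding XZ_def det4_sum u_def by (simp add: det4_simps sum_distrib_left algebra_simps)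
  then have "(\<Sum>k=1..n. u k * x1 k) = 0" "(\<Sum>k=1..n. u k * x2 k) = 0"
    unfolding A_def B_def by (simp_all add: det4_same)
  ultimately show False
    using TNN2_kernel_no_single_sign_change[OF tnn, of u 1] by fastforce
qed

lemma sign_change_witness_in_amplituhedron:
  assumes ij: "2 \<le> i" "i < j" "j < n"
    and coeffs: "\<alpha> > 0" "\<beta> > 0" "\<gamma> \<ge> 0" "\<alpha>' > 0" "\<delta> < 0" "\<epsilon> \<le> 0"
    and \<epsilon>_neg: "j = i + 1 \<Longrightarrow> \<epsilon> < 0"
  shows "pl (\<alpha> *s Z 1 + \<beta> *s Z i + \<gamma> *s Z (i + 1)) (\<alpha>' *s Z 1 + \<delta> *s Z j + \<epsilon> *s Z (j + 1))
           \<in> amplituhedron n Z"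
    (is "pl ?v1 ?v2 \<in> _")
proof -
  define x1 where "x1 k = (if k = 1 then \<alpha> else 0) + (if k = i then \<beta> else 0) + (if k = i + 1 then \<gamma> else 0)" for k
  define x2 where "x2 k = (if k = 1 then \<alpha>' else 0) + (if k = j then \<delta> else 0) + (if k = j + 1 then \<epsilon> else 0)" for k
  have XZ: "XZ x1 = ?v1" "XZ x2 = ?v2"
    unfolding x1_def x2_def XZ_add using ij by (simp_all add: XZ_delta)
  have tnn: "TNN2 n x1 x2"
    unfolding x1_def x2_def using ij coeffs by (intro TNN2_three_term_support) auto
  have reorder: "det4 (Z i) (Z k) (Z 1) (Z (i + 1)) = - det4 (Z 1) (Z i) (Z (i + 1)) (Z k)" for k
    by (simp add: det4_expand algebra_simps)
  have expand: "det4 ?v1 ?v2 (Z 1) (Z (i + 1)) =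
      \<beta> * (\<delta> * det4 (Z i) (Z j) (Z 1) (Z (i + 1)) + \<epsilon> * det4 (Z i) (Z (j + 1)) (Z 1) (Z (i + 1)))"
    by (simp add: det4_simps algebra_simps)
  have "\<sigma> * det4 ?v1 ?v2 (Z 1) (Z (i + 1)) =
      \<beta> * ((- \<delta>) * (\<sigma> * det4 (Z 1) (Z i) (Z (i + 1)) (Z j))
         + (- \<epsilon>) * (\<sigma> * det4 (Z 1) (Z i) (Z (i + 1)) (Z (j + 1))))"
    unfolding expand reorder by (simp add: algebra_simps)
  also have "\<dots> > 0"
  proof (cases "j = i + 1")
    case True
    then have "(- \<epsilon>) * (\<sigma> * det4 (Z 1) (Z i) (Z (i + 1)) (Z (j + 1))) > 0"
      using \<epsilon>_neg positive_minors[of 1 i "i + 1" "j + 1"] ij by (simp add: mult_neg_pos)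
    then show ?thesis
      using True coeffs by (simp add: det4_same mult_pos_neg)
  next
    case False
    then have "(- \<delta>) * (\<sigma> * det4 (Z 1) (Z i) (Z (i + 1)) (Z j)) > 0"
      "(- \<epsilon>) * (\<sigma> * det4 (Z 1) (Z i) (Z (i + 1)) (Z (j + 1))) \<ge> 0"
      using coeffs positive_minors[of 1 i "i + 1" j] positive_minors[of 1 i "i + 1" "j + 1"] ij
      by (auto simp: mult_neg_pos mult_nonpos_nonneg)
    then show ?thesis using coeffs by (simp add: add_pos_nonneg)
  qed
  finally have "pl ?v1 ?v2 \<noteq> 0"
    by (auto simp: det4_eq_bracket)
  then show ?thesis
    using pl_XZ_in_amplituhedron[OF tnn] XZ by simp
qed

text \<open>The points \<open>v1 = AB \<inter> (1, i, i+1)\<close> and \<open>v2 = AB \<inter> (1, j, j+1)\<close>, at the first two sign changes of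
  \<open>j \<mapsto> \<langle>AB 1j\<rangle>\<close>, span the line AB and come from a totally nonnegative matrix.\<close>
lemma sign_flip_in_amplituhedron_pos:
  assumes adj: "\<And>r s. adjacent r s \<Longrightarrow> det4 A B (Z r) (Z s) > 0"
    and flip: "2 \<le> j0" "j0 \<le> n" "det4 A B (Z 1) (Z j0) < 0"
  shows "pl A B \<in> amplituhedron n Z"
proof -
  define s where "s k = det4 A B (Z 1) (Z k)" for k
  obtain i j where ij: "2 \<le> i" "i < j" "j < n"
    and s: "s i \<ge> 0" "s (i + 1) < 0" "s j \<le> 0" "s (j + 1) > 0"
    using obtain_sign_changes[of s n j0] adj[OF adjacent_1_2] adj[OF adjacent_1_n] flip
    unfolding s_def by blast
  define v1 where "v1 = det4 A B (Z i) (Z (i + 1)) *s Z 1 + (- s (i + 1)) *s Z i + s i *s Z (i + 1)"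
  define v2 where "v2 = det4 A B (Z j) (Z (j + 1)) *s Z 1 + (- s (j + 1)) *s Z j + s j *s Z (j + 1)"
  have v1_v2_in: "pl v1 v2 \<in> amplituhedron n Z"
    unfolding v1_def v2_def using ij s adj[OF adjacent_Suc[of i]] adj[OF adjacent_Suc[of j]]
    by (intro sign_change_witness_in_amplituhedron) auto
  have "v1 = (- det4 B (Z 1) (Z i) (Z (i + 1))) *s A + det4 A (Z 1) (Z i) (Z (i + 1)) *s B"
       "v2 = (- det4 B (Z 1) (Z j) (Z (j + 1))) *s A + det4 A (Z 1) (Z j) (Z (j + 1)) *s B"
    unfolding v1_def v2_def s_def det4_line_meets_plane[symmetric]
    by (simp_all add: scalar_mult_eq_scaleR)
  then obtain c where c: "pl v1 v2 = c *s pl A B"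
    using pl_lincomb by metis
  have "c \<noteq> 0"
    using v1_v2_in c unfolding amplituhedron_eq by auto
  with c have "pl A B = (1 / c) *s pl v1 v2"
    by (simp add: vec_eq_iff)
  then show ?thesis
    using amplituhedron_smult[OF _ v1_v2_in] \<open>c \<noteq> 0\<close> by simp
qed

lemma sign_flip_in_amplituhedron:
  assumes \<tau>: "\<tau> = 1 \<or> \<tau> = -1"
    and adj: "\<And>r s. adjacent r s \<Longrightarrow> \<tau> * det4 A B (Z r) (Z s) > 0"
    and flip: "j0 \<in> {2..n}" "\<tau> * det4 A B (Z 1) (Z j0) < 0"
  shows "pl A B \<in> amplituhedron n Z"
proof -
  have "pl (\<tau> *s A) B \<in> amplituhedron n Z"
    using adj flip by (intro sign_flip_in_amplituhedron_pos[of "\<tau> *s A" B j0]) (auto simp: det4_smult)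
  then have "\<tau> *s pl (\<tau> *s A) B \<in> amplituhedron n Z"
    using \<tau> by (intro amplituhedron_smult) auto
  moreover have "\<tau> *s pl (\<tau> *s A) B = pl A B"
    using \<tau> by (auto simp: pl_smult_left vec_eq_iff)
  ultimately show ?thesis by simp
qed

definition sign_flip_region :: "(real^6) set" where
  "sign_flip_region = {p. \<exists>\<tau>\<in>{1, -1}. (\<forall>r s. adjacent r s \<longrightarrow> \<tau> * bracket p (Z r) (Z s) > 0) \<and>
                                     (\<exists>j\<in>{2..n}. \<tau> * bracket p (Z 1) (Z j) < 0)}"

lemma open_sign_flip_region: "open sign_flip_region"
proof -
  have "sign_flip_region =
      (\<Union>\<tau>\<in>{1, -1}. (\<Inter>rs\<in>{(r, s). adjacent r s}. {p. \<tau> * bracket p (Z (fst rs)) (Z (snd rs)) > 0})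
                    \<inter> (\<Union>j\<in>{2..n}. {p. \<tau> * bracket p (Z 1) (Z j) < 0}))"
    unfolding sign_flip_region_def by auto
  also have "open \<dots>"
    by (intro open_UN ballI open_Int open_INT finite_adjacent open_Collect_less
        continuous_on_mult continuous_on_const continuous_on_bracket)
  finally show ?thesis .
qed

lemma GrR_sign_flip_region_subset: "GrR \<inter> sign_flip_region \<subseteq> amplituhedron n Z"
proof
  fix q assume q: "q \<in> GrR \<inter> sign_flip_region"
  then obtain A B where q_eq: "q = pl A B"
    unfolding GrR_def by blast
  from q obtain \<tau> j where \<tau>: "\<tau> = 1 \<or> \<tau> = -1"
    and "\<And>r s. adjacent r s \<Longrightarrow> \<tau> * det4 A B (Z r) (Z s) > 0"
    and "j \<in> {2..n}" "\<tau> * det4 A B (Z 1) (Z j) < 0"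
    unfolding sign_flip_region_def q_eq det4_eq_bracket by blast
  then show "q \<in> amplituhedron n Z"
    unfolding q_eq by (rule sign_flip_in_amplituhedron)
qed

lemma amplituhedron_in_sign_flip_region:
  assumes p: "p \<in> amplituhedron n Z" and nz: "\<And>r s. adjacent r s \<Longrightarrow> bracket p (Z r) (Z s) \<noteq> 0"
  shows "p \<in> sign_flip_region"
proof -
  obtain \<rho> :: real where \<rho>: "\<rho> = 1 \<or> \<rho> = -1"
    and nonneg: "\<And>r s. adjacent r s \<Longrightarrow> \<rho> * bracket p (Z r) (Z s) \<ge> 0"
    using amplituhedron_adjacent_sign[OF p] by blast
  have pos: "\<rho> * bracket p (Z r) (Z s) > 0" if "adjacent r s" for r s
    using nonneg[OF that] nz[OF that] \<rho> by (auto simp: less_le)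
  obtain x1 x2 where p_eq: "p = pl (XZ x1) (XZ x2)" and tnn: "TNN2 n x1 x2"
    using p unfolding amplituhedron_eq by blast
  have "\<exists>j\<in>{2..n}. \<rho> * bracket p (Z 1) (Z j) < 0"
    using amplituhedron_bracket_sign_flip[OF tnn \<rho>] pos unfolding p_eq det4_eq_bracket by blast
  then show ?thesis
    unfolding sign_flip_region_def using \<rho> pos by auto
qed

lemma euclid_boundary_adjacent_bracket_zero:
  assumes "p \<in> euclid_boundary (amplituhedron n Z)"
  obtains r s where "adjacent r s" "bracket p (Z r) (Z s) = 0"
proof -
  have p: "p \<in> amplituhedron n Z" "p \<notin> (top_of_set GrR) interior_of (amplituhedron n Z)"
    using assms unfolding euclid_boundary_def by auto
  have "openin (top_of_set GrR) (GrR \<inter> sign_flip_region)"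
    using open_sign_flip_region by (auto simp: openin_open_Int)
  then have "p \<notin> sign_flip_region"
    using p GrR_sign_flip_region_subset amplituhedron_subset_GrR unfolding interior_of_def by blast
  then show ?thesis
    using amplituhedron_in_sign_flip_region[OF p(1)] that by blast
qed

definition adjacent_sections :: "(complex^6) set" where
  "adjacent_sections = {q \<in> GrC. \<exists>r s. adjacent r s \<and> bracket q (cvec (Z r)) (cvec (Z s)) = 0}"

lemma adjacent_sections_eq:
  "adjacent_sections = (\<Union>i\<in>{1..n-1}. bracket_section Z i (i + 1)) \<union> bracket_section Z 1 n"
proof
  show "adjacent_sections \<subseteq> (\<Union>i\<in>{1..n-1}. bracket_section Z i (i + 1)) \<union> bracket_section Z 1 n"
    unfolding adjacent_sections_def bracket_section_eq adjacent_def by auto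
  show "(\<Union>i\<in>{1..n-1}. bracket_section Z i (i + 1)) \<union> bracket_section Z 1 n \<subseteq> adjacent_sections"
  proof (intro Un_least UN_least)
    fix i assume "i \<in> {1..n-1}"
    then have "adjacent i (i + 1)"
      using n_ge_4 by (intro adjacent_Suc) auto
    then show "bracket_section Z i (i + 1) \<subseteq> adjacent_sections"
      unfolding adjacent_sections_def bracket_section_eq by blast
  next
    show "bracket_section Z 1 n \<subseteq> adjacent_sections"
      using adjacent_1_n unfolding adjacent_sections_def bracket_section_eq by blast
  qed
qed

lemma zariski_closed_adjacent_sections: "zariski_closed_Gr adjacent_sections"
proof -
  let ?F = "\<lambda>q. \<Prod>rs\<in>{(r, s). adjacent r s}. bracket q (cvec (Z (fst rs))) (cvec (Z (snd rs)))"
  have "homog_poly ?F"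
    unfolding homog_poly_def
  proof
    show "?F \<in> poly_fun"
      by (rule poly_fun_prod[OF finite_adjacent]) (auto simp: poly_fun_bracket)
    show "\<exists>d. \<forall>c q. ?F (c *s q) = c ^ d * ?F q"
      by (rule exI[of _ "card {(r, s). adjacent r s}"]) (simp add: bracket_smult prod.distrib)
  qed
  moreover have "adjacent_sections = {q \<in> GrC. ?F q = 0}"
    unfolding adjacent_sections_def using finite_adjacent by (auto simp: prod_zero_iff)
  ultimately show ?thesis
    unfolding zariski_closed_Gr_def by (intro exI[of _ "{?F}"]) auto
qed

lemma algebraic_boundary_subset: "algebraic_boundary n Z \<subseteq> adjacent_sections"
  unfolding algebraic_boundary_def
proof (rule zariski_closure_Gr_least[OF zariski_closed_adjacent_sections], rule image_subsetI)
  fix p assume p: "p \<in> euclid_boundary (amplituhedron n Z)"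
  then obtain r s where "adjacent r s" "bracket p (Z r) (Z s) = 0"
    by (rule euclid_boundary_adjacent_bracket_zero)
  moreover have "cvec p \<in> GrC"
    using p amplituhedron_subset_GrR cvec_GrR unfolding euclid_boundary_def by blast
  ultimately show "cvec p \<in> adjacent_sections"
    unfolding adjacent_sections_def by (auto simp: bracket_cvec)
qed

lemma amplituhedron_adjacent_brackets_same_sign:
  assumes "p \<in> amplituhedron n Z" "adjacent r s" "adjacent r' s'"
  shows "bracket p (Z r) (Z s) * bracket p (Z r') (Z s') \<ge> 0"
proof -
  obtain \<rho> :: real where "\<rho> = 1 \<or> \<rho> = -1"
    and "\<rho> * bracket p (Z r) (Z s) \<ge> 0" "\<rho> * bracket p (Z r') (Z s') \<ge> 0"
    using amplituhedron_adjacent_sign[OF assms(1)] assms(2,3) by metis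
  then show ?thesis
    by (auto simp: zero_le_mult_iff)
qed

text \<open>Moving \<open>p\<close> along \<open>W\<close> gives the vanishing adjacent bracket \<open>\<langle>i i'\<rangle>\<close> either sign while \<open>\<langle>j k\<rangle>\<close>
  stays fixed, and lines with two adjacent brackets of opposite signs lie outside the amplituhedron.\<close>
lemma not_interior_by_perturbation:
  assumes adj: "adjacent i i'" "adjacent j k"
    and p: "bracket p (Z i) (Z i') = 0" "bracket p (Z j) (Z k) \<noteq> 0"
    and W: "bracket W (Z i) (Z i') \<noteq> 0" "bracket W (Z j) (Z k) = 0"
    and line: "\<And>e. \<exists>A B. p + e *s W = pl A B"
  shows "p \<notin> (top_of_set GrR) interior_of (amplituhedron n Z)"
proof (rule not_in_interior_of_GrR)
  fix \<epsilon> :: real assume "\<epsilon> > 0"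
  define x where "x = bracket W (Z i) (Z i') * bracket p (Z j) (Z k)"
  define e where "e = - sgn x * \<epsilon> / (norm W + 1)"
  let ?q = "p + e *s W"
  have x: "x \<noteq> 0"
    using p W unfolding x_def by simp
  have brackets: "bracket ?q (Z i) (Z i') * bracket ?q (Z j) (Z k) = e * x"
    using p W unfolding x_def by (simp add: bracket_add bracket_smult)
  have "e * x = - (\<bar>x\<bar> * \<epsilon> / (norm W + 1))"
    unfolding e_def by (simp add: sgn_if abs_if)
  also have "\<dots> < 0"
    using x \<open>\<epsilon> > 0\<close> by (simp add: add_nonneg_pos)
  finally have "e * x < 0" .
  then have "?q \<notin> amplituhedron n Z"
    using amplituhedron_adjacent_brackets_same_sign[OF _ adj] brackets by fastforce
  moreover have "?q \<in> GrR"
  proof -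
    obtain A B where AB: "?q = pl A B"
      using line by blast
    moreover have "pl A B \<noteq> 0"
      using brackets \<open>e * x < 0\<close> unfolding AB by auto
    ultimately show ?thesis
      unfolding GrR_def by blast
  qed
  moreover have "dist ?q p < \<epsilon>"
  proof -
    have "dist ?q p = \<epsilon> * norm W / (norm W + 1)"
      using x \<open>\<epsilon> > 0\<close> unfolding e_def
      by (simp add: dist_norm scalar_mult_eq_scaleR abs_mult sgn_if)
    also have "\<dots> < \<epsilon>"
      using \<open>\<epsilon> > 0\<close> by (simp add: pos_divide_less_eq add_nonneg_pos)
    finally show ?thesis .
  qed
  ultimately show "\<exists>q\<in>GrR - amplituhedron n Z. dist q p < \<epsilon>"
    by blast
qed

lemma line_meeting_in_euclid_boundary:
  assumes adj: "adjacent a b" "adjacent j k" and idx: "a \<in> {1..n}" "b \<in> {1..n}" "j \<in> {1..n}" "k \<in> {1..n}"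
    and D: "det4 (Z a) (Z b) (Z j) (Z k) \<noteq> 0"
    and t: "t 0 * t 3 - t 1 * t 2 \<noteq> 0" "t 5 \<noteq> 0"
    and tnn: "TNN2 n (\<lambda>l. (if l = a then t 0 else 0) + (if l = b then t 1 else 0))
                     (\<lambda>l. (if l = a then t 2 else 0) + (if l = b then t 3 else 0)
                         + (if l = j then t 4 else 0) + (if l = k then t 5 else 0))"
  shows "line_meeting (Z a) (Z b) (Z j) (Z k) t \<in> euclid_boundary (amplituhedron n Z)"
proof -
  define A0 where "A0 = t 0 *s Z a + t 1 *s Z b"
  define B0 where "B0 = t 2 *s Z a + t 3 *s Z b + t 4 *s Z j + t 5 *s Z k"
  have p_eq: "line_meeting (Z a) (Z b) (Z j) (Z k) t = pl A0 B0"
    unfolding line_meeting_def A0_def B0_def ..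
  have jk: "bracket (pl A0 B0) (Z j) (Z k) = (t 0 * t 3 - t 1 * t 2) * det4 (Z a) (Z b) (Z j) (Z k)"
    unfolding det4_eq_bracket[symmetric] A0_def B0_def
    by (simp add: det4_simps det4_swap_12[of "Z b" "Z a"] algebra_simps)
  have "pl A0 B0 \<in> amplituhedron n Z"
  proof -
    have "XZ (\<lambda>l. (if l = a then t 0 else 0) + (if l = b then t 1 else 0)) = A0"
         "XZ (\<lambda>l. (if l = a then t 2 else 0) + (if l = b then t 3 else 0)
                + (if l = j then t 4 else 0) + (if l = k then t 5 else 0)) = B0"
      unfolding A0_def B0_def XZ_add using idx by (simp_all add: XZ_delta)
    moreover have "pl A0 B0 \<noteq> 0"
      using jk t D by auto
    ultimately show ?thesis
      using pl_XZ_in_amplituhedron[OF tnn] by simp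
  qed
  moreover have "pl A0 B0 \<notin> (top_of_set GrR) interior_of (amplituhedron n Z)"
  proof (rule not_interior_by_perturbation[OF adj, of _ "pl (Z j) B0"])
    show "bracket (pl A0 B0) (Z a) (Z b) = 0"
      unfolding det4_eq_bracket[symmetric] A0_def by (simp add: det4_simps algebra_simps)
    show "bracket (pl A0 B0) (Z j) (Z k) \<noteq> 0"
      using jk t D by simp
    have "bracket (pl (Z j) B0) (Z a) (Z b) = t 5 * det4 (Z a) (Z b) (Z j) (Z k)"
      unfolding det4_eq_bracket[symmetric] B0_def
      by (simp add: det4_simps det4_swap_pairs[of "Z j" "Z k"])
    then show "bracket (pl (Z j) B0) (Z a) (Z b) \<noteq> 0"
      using t D by simp
    show "bracket (pl (Z j) B0) (Z j) (Z k) = 0"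
      unfolding det4_eq_bracket[symmetric] by (simp add: det4_same)
    show "\<exists>A B. pl A0 B0 + e *s pl (Z j) B0 = pl A B" for e
      by (intro exI[of _ "A0 + e *s Z j"] exI[of _ B0]) (simp add: pl_add_left pl_smult_left)
  qed
  ultimately show ?thesis
    unfolding euclid_boundary_def p_eq by blast
qed

text \<open>A homogeneous polynomial vanishing on the boundary vanishes on the image of an open orthant
  under \<open>line_meeting\<close>, hence on all of its (complex) image, which is the whole section.\<close>
lemma bracket_section_subset_algebraic_boundary:
  assumes D: "det4 (Z r) (Z s) (Z j) (Z k) \<noteq> 0" and e: "\<And>m. m < 6 \<Longrightarrow> e m \<noteq> 0"
    and orthant: "\<And>t. (\<And>m. m < 6 \<Longrightarrow> 0 < e m * t m) \<Longrightarrow>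
                   line_meeting (Z r) (Z s) (Z j) (Z k) t \<in> euclid_boundary (amplituhedron n Z)"
  shows "bracket_section Z r s \<subseteq> algebraic_boundary n Z"
proof
  fix q assume "q \<in> bracket_section Z r s"
  then obtain A B where q: "q = pl A B" "pl A B \<noteq> 0" and meet: "det4 A B (cvec (Z r)) (cvec (Z s)) = 0"
    unfolding bracket_section_def by blast
  let ?line = "line_meeting (cvec (Z r)) (cvec (Z s)) (cvec (Z j)) (cvec (Z k))"
  obtain t0 where t0: "q = ?line t0"
    using obtain_line_meeting[OF meet] D q(1) by (metis det4_cvec of_real_eq_0_iff)
  have "q \<in> T" if T: "zariski_closed_Gr T" "cvec ` euclid_boundary (amplituhedron n Z) \<subseteq> T" for T
  proof -
    obtain F where F: "\<And>f. f \<in> F \<Longrightarrow> homog_poly f" and T_eq: "T = {p \<in> GrC. \<forall>f\<in>F. f p = 0}"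
      using T(1) unfolding zariski_closed_Gr_def by blast
    have "f (?line t) = 0" if f: "f \<in> F" for f t
    proof (rule separately_polynomial_eq_0[where h = "\<lambda>t. f (?line t)" and N = 6
          and S = "\<lambda>m. complex_of_real ` {x. 0 < e m * x}"])
      show "separately_polynomial (\<lambda>t. f (?line t))"
        using F[OF f] separately_polynomial_line_meeting
        unfolding homog_poly_def by (blast intro: separately_polynomial_poly_fun)
      show "infinite (complex_of_real ` {x. 0 < e m * x})" if "m < 6" for m
        using e[OF that] by (rule infinite_image_of_real_halfline)
      fix t assume t: "\<And>m. m < 6 \<Longrightarrow> t m \<in> complex_of_real ` {x. 0 < e m * x}"
      define t' where "t' m = Re (t m)" for m
      have "?line t = cvec (line_meeting (Z r) (Z s) (Z j) (Z k) t')"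
        unfolding line_meeting_cvec[symmetric] t'_def using t by (intro line_meeting_cong) force
      moreover have "line_meeting (Z r) (Z s) (Z j) (Z k) t' \<in> euclid_boundary (amplituhedron n Z)"
        using t unfolding t'_def by (intro orthant) force
      ultimately show "f (?line t) = 0"
        using T(2) f unfolding T_eq by auto
    qed
    moreover have "q \<in> GrC"
      using q unfolding GrC_def by blast
    ultimately show ?thesis
      unfolding T_eq t0 by auto
  qed
  then show "q \<in> algebraic_boundary n Z"
    unfolding algebraic_boundary_def zariski_closure_Gr_def by blast
qed

lemma succ_section_subset_algebraic_boundary_of_adjacent_pair:
  assumes i: "1 \<le> i" "i < n" and jk: "adjacent j k" "j \<in> {1..n}" "k \<in> {1..n}"
    and D: "det4 (Z i) (Z (i + 1)) (Z j) (Z k) \<noteq> 0"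
  shows "bracket_section Z i (i + 1) \<subseteq> algebraic_boundary n Z"
proof -
  have distinct: "j \<noteq> i" "j \<noteq> i + 1" "k \<noteq> i" "k \<noteq> i + 1"
    using D by (auto simp: det4_same)
  define e :: "nat \<Rightarrow> real" where
    "e = (!) [1, 1, -1, 1, if j < i then -1 else 1, if k < i then -1 else 1]"
  show ?thesis
  proof (rule bracket_section_subset_algebraic_boundary[OF D, of e])
    show "e m \<noteq> 0" if "m < 6" for m
      using less_6_cases[OF that] unfolding e_def by auto
    fix t assume t: "\<And>m. m < 6 \<Longrightarrow> 0 < e m * t m"
    have signs: "t 0 > 0" "t 1 > 0" "t 2 < 0" "t 3 > 0"
      "j < i \<Longrightarrow> t 4 < 0" "\<not> j < i \<Longrightarrow> t 4 > 0" "k < i \<Longrightarrow> t 5 < 0" "\<not> k < i \<Longrightarrow> t 5 > 0"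
      using t[of 0] t[of 1] t[of 2] t[of 3] t[of 4] t[of 5] unfolding e_def by (auto simp: zero_less_mult_iff)
    show "line_meeting (Z i) (Z (i + 1)) (Z j) (Z k) t \<in> euclid_boundary (amplituhedron n Z)"
    proof (rule line_meeting_in_euclid_boundary[OF adjacent_Suc[OF i] jk(1) _ _ jk(2,3) D])
      show "i \<in> {1..n}" "i + 1 \<in> {1..n}" using i by auto
      show "t 0 * t 3 - t 1 * t 2 \<noteq> 0"
        using signs by (smt (verit) mult_pos_neg mult_pos_pos)
      show "t 5 \<noteq> 0" using signs by (cases "k < i") auto
      show "TNN2 n (\<lambda>l. (if l = i then t 0 else 0) + (if l = i + 1 then t 1 else 0))
          (\<lambda>l. (if l = i then t 2 else 0) + (if l = i + 1 then t 3 else 0)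
             + (if l = j then t 4 else 0) + (if l = k then t 5 else 0))"
        using signs distinct
        by (intro TNN2_adjacent_support i) (auto simp: less_imp_le add_nonpos_nonpos add_nonneg_nonneg)
    qed
  qed
qed

lemma succ_section_subset_algebraic_boundary:
  assumes i: "1 \<le> i" "i < n"
  shows "bracket_section Z i (i + 1) \<subseteq> algebraic_boundary n Z"
proof -
  consider "i + 3 \<le> n" | "i + 2 = n" | "i + 1 = n"
    using i by linarith
  then show ?thesis
  proof cases
    case 1
    then have "det4 (Z i) (Z (i + 1)) (Z (i + 2)) (Z (i + 3)) \<noteq> 0"
      using positive_minors[of i "i + 1" "i + 2" "i + 3"] i by auto
    moreover have "adjacent (i + 2) (i + 3)"
      using 1 i unfolding adjacent_def by auto
    ultimately show ?thesis
      using 1 by (intro succ_section_subset_algebraic_boundary_of_adjacent_pair[OF i, of "i + 2" "i + 3"]) auto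
  next
    case 2
    then have "det4 (Z i) (Z (i + 1)) (Z 1) (Z n) \<noteq> 0"
      using positive_minors[of 1 i "i + 1" n] i n_ge_4 by (auto simp: det4_rotate_123[of "Z i"])
    then show ?thesis
      using i n_ge_4 by (intro succ_section_subset_algebraic_boundary_of_adjacent_pair[OF i adjacent_1_n]) auto
  next
    case 3
    then have "det4 (Z i) (Z (i + 1)) (Z 1) (Z 2) \<noteq> 0"
      using positive_minors[of 1 2 i "i + 1"] i n_ge_4 by (auto simp: det4_swap_pairs[of "Z i"])
    then show ?thesis
      using i n_ge_4 by (intro succ_section_subset_algebraic_boundary_of_adjacent_pair[OF i adjacent_1_2]) auto
  qed
qed

lemma wrap_section_subset_algebraic_boundary: "bracket_section Z 1 n \<subseteq> algebraic_boundary n Z"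
proof -
  have "det4 (Z 1) (Z n) (Z 2) (Z 3) = det4 (Z 1) (Z 2) (Z 3) (Z n)"
    by (rule det4_rotate_234)
  then have D: "det4 (Z 1) (Z n) (Z 2) (Z 3) \<noteq> 0"
    using positive_minors[of 1 2 3 n] n_ge_4 by auto
  define e :: "nat \<Rightarrow> real" where "e = (!) [1, -1, 1, 1, 1, 1]"
  show ?thesis
  proof (rule bracket_section_subset_algebraic_boundary[OF D, of e])
    show "e m \<noteq> 0" if "m < 6" for m
      using less_6_cases[OF that] unfolding e_def by auto
    fix t assume t: "\<And>m. m < 6 \<Longrightarrow> 0 < e m * t m"
    have signs: "t 0 > 0" "t 1 < 0" "t 2 > 0" "t 3 > 0" "t 4 > 0" "t 5 > 0"
      using t[of 0] t[of 1] t[of 2] t[of 3] t[of 4] t[of 5] unfolding e_def by auto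
    have "adjacent 2 3"
      using n_ge_4 adjacent_Suc[of 2] by simp
    then show "line_meeting (Z 1) (Z n) (Z 2) (Z 3) t \<in> euclid_boundary (amplituhedron n Z)"
    proof (rule line_meeting_in_euclid_boundary[OF adjacent_1_n _ _ _ _ _ D])
      show "1 \<in> {1..n}" "n \<in> {1..n}" "2 \<in> {1..n}" "3 \<in> {1..n}" using n_ge_4 by auto
      show "t 0 * t 3 - t 1 * t 2 \<noteq> 0"
        using signs by (smt (verit) mult_neg_pos mult_pos_pos)
      show "t 5 \<noteq> 0" using signs by simp
      show "TNN2 n (\<lambda>l. (if l = 1 then t 0 else 0) + (if l = n then t 1 else 0))
          (\<lambda>l. (if l = 1 then t 2 else 0) + (if l = n then t 3 else 0)
             + (if l = 2 then t 4 else 0) + (if l = 3 then t 5 else 0))"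
        using signs n_ge_4 by (intro TNN2_end_support) auto
    qed
  qed
qed

lemma algebraic_boundary_eq:
  "algebraic_boundary n Z = (\<Union>i\<in>{1..n-1}. bracket_section Z i (i + 1)) \<union> bracket_section Z 1 n"
proof
  show "algebraic_boundary n Z \<subseteq> (\<Union>i\<in>{1..n-1}. bracket_section Z i (i + 1)) \<union> bracket_section Z 1 n"
    using algebraic_boundary_subset unfolding adjacent_sections_eq .
  show "(\<Union>i\<in>{1..n-1}. bracket_section Z i (i + 1)) \<union> bracket_section Z 1 n \<subseteq> algebraic_boundary n Z"
  proof (intro Un_least UN_least)
    fix i assume "i \<in> {1..n-1}"
    then show "bracket_section Z i (i + 1) \<subseteq> algebraic_boundary n Z"
      using n_ge_4 by (intro succ_section_subset_algebraic_boundary) auto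
  qed (rule wrap_section_subset_algebraic_boundary)
qed

end

lemma totally_positive_rowsI:
  assumes "n \<ge> 4" "totally_positive_Z n Z"
  obtains \<sigma> where "totally_positive_rows n Z \<sigma>"
proof -
  from assms(2) consider
      "\<forall>a b c d. 1 \<le> a \<and> a < b \<and> b < c \<and> c < d \<and> d \<le> n \<longrightarrow> det4 (Z a) (Z b) (Z c) (Z d) > 0"
    | "\<forall>a b c d. 1 \<le> a \<and> a < b \<and> b < c \<and> c < d \<and> d \<le> n \<longrightarrow> det4 (Z a) (Z b) (Z c) (Z d) < 0"
    unfolding totally_positive_Z_def by blast
  then show ?thesis
  proof cases
    case 1
    then show ?thesis by (intro that[of 1] totally_positive_rows.intro) (use assms(1) in auto)
  next
    case 2
    then show ?thesis by (intro that[of "-1"] totally_positive_rows.intro) (use assms(1) in auto)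
  qed
qed

theorem proposition3p1:
  fixes n :: nat and Z :: "nat \<Rightarrow> real^4"
  assumes "n \<ge> 4"
    and "totally_positive_Z n Z"
  shows "algebraic_boundary n Z =
           (\<Union>i\<in>{1..n-1}. bracket_section Z i (i+1)) \<union> bracket_section Z 1 n"
proof -
  obtain \<sigma> where "totally_positive_rows n Z \<sigma>"
    using totally_positive_rowsI[OF assms] .
  then show ?thesis
    by (rule totally_positive_rows.algebraic_boundary_eq)
qed

end
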